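(* Let $G$ be the $p\times p$ two-dimensional lattice (grid graph) with $n=p^2$ vertices, and let $\rho=c\,n^{-1/2}$ for a constant $c>0$. Then, as $n\to\infty$, $H_0:\beta\in\Theta_0$ and $H_1:\beta\in\Theta_1$ are asymptotically distinguished by the spectral scan statistic $\hat s$ provided $$\frac{\eta}{\sigma}=\omega(n^{3/8}).$$
   Context: The $p\times p$ lattice has vertex set $[p]\times[p]$, with unit-weight edges between vertices at $\ell_1$-distance 1. $L$ is its combinatorial Laplacian ($L=D-W$). We observe $y=\beta+\varepsilon$, $\varepsilon\sim N(0,\sigma^2I_n)$, $\sigma>0$ known; $P_\beta$ is the law of $y$. $\mathbf 1$ is the all-ones vector, $\mathbf 1_C$ the indicator of $C$, $\bar C=V\setminus C$, $|\partial C|$ the number of edges between $C$ and $\bar C$. $\mathcal{C}(\rho)=\{C\subset V:C\ne\emptyset,C\ne V,|\partial C|/(|C||\bar C|)\le\rho/n\}$. $\bar\beta=\frac1n\mathbf 1^\top\beta$; $\Theta_0=\{\mu\mathbf 1:\mu\in\mathbb{R}\}$, and for $\eta>0$, $\Theta_1=\{\mu\mathbf 1+\delta\mathbf 1_C:\mu\in\mathbb{R},\delta\ne0,C\in\mathcal{C}(\rho),\|\beta-\bar\beta\mathbf 1\|\ge\eta\}$. $\tilde y=y-\bar y\mathbf 1$. Spectral scan statistic: $\hat s=\sup\{(x^\top\tilde y)^2:x\in\mathbb{R}^n,x^\top Lx\le\rho,\|x\|\le1,x^\top\mathbf 1=0\}$. $\sigma,\eta$ may depend on $n$; $a_n=\omega(b_n)$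 means $b_n/a_n\to0$. Asymptotically distinguished by $\hat s$: there exist thresholds $\tau_n$ such that $T=\mathbf 1\{\hat s>\tau_n\}$ satisfies $\sup_{\beta\in\Theta_0}P_\beta(T=1)\to0$ and $\sup_{\beta\in\Theta_1}P_\beta(T=0)\to0$. *)

theory Defs
  imports "HOL-Probability.Probability"
begin

type_synonym vtx = "nat \<times> nat"

definition grid_V :: "nat \<Rightarrow> vtx set" where
  "grid_V p = {..<p} \<times> {..<p}"

definition grid_adj :: "vtx \<Rightarrow> vtx \<Rightarrow> bool" where
  "grid_adj u v \<longleftrightarrow> \<bar>int (fst u) - int (fst v)\<bar> + \<bar>int (snd u) - int (snd v)\<bar> = 1"

definition grid_W :: "nat \<Rightarrow> vtx \<Rightarrow> vtx \<Rightarrow> real" where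
  "grid_W p u v = (if u \<in> grid_V p \<and> v \<in> grid_V p \<and> grid_adj u v then 1 else 0)"

definition grid_D :: "nat \<Rightarrow> vtx \<Rightarrow> vtx \<Rightarrow> real" where
  "grid_D p u v = (if u = v then (\<Sum>w\<in>grid_V p. grid_W p u w) else 0)"

definition grid_L :: "nat \<Rightarrow> vtx \<Rightarrow> vtx \<Rightarrow> real" where
  "grid_L p u v = grid_D p u v - grid_W p u v"

definition quadL :: "nat \<Rightarrow> (vtx \<Rightarrow> real) \<Rightarrow> real" where
  "quadL p x = (\<Sum>u\<in>grid_V p. \<Sum>v\<in>grid_V p. x u * grid_L p u v * x v)"

definition vinner :: "nat \<Rightarrow> (vtx \<Rightarrow> real) \<Rightarrow> (vtx \<Rightarrow> real) \<Rightarrow> real" where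
  "vinner p x y = (\<Sum>v\<in>grid_V p. x v * y v)"

definition vnorm :: "nat \<Rightarrow> (vtx \<Rightarrow> real) \<Rightarrow> real" where
  "vnorm p x = sqrt (vinner p x x)"

definition vmean :: "nat \<Rightarrow> (vtx \<Rightarrow> real) \<Rightarrow> real" where
  "vmean p x = (\<Sum>v\<in>grid_V p. x v) / real (card (grid_V p))"

definition centre :: "nat \<Rightarrow> (vtx \<Rightarrow> real) \<Rightarrow> vtx \<Rightarrow> real" where
  "centre p x = (\<lambda>v. x v - vmean p x)"

definition cut_size :: "nat \<Rightarrow> vtx set \<Rightarrow> nat" where
  "cut_size p C = card {(u, v). u \<in> C \<and> v \<in> grid_V p - C \<and> grid_adj u v}"

definition cut_class :: "nat \<Rightarrow> real \<Rightarrow> vtx set set" where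
  "cut_class p \<rho> = {C. C \<subseteq> grid_V p \<and> C \<noteq> {} \<and> C \<noteq> grid_V p \<and>
      real (cut_size p C) / (real (card C) * real (card (grid_V p - C)))
        \<le> \<rho> / real (card (grid_V p))}"

definition Theta0 :: "nat \<Rightarrow> (vtx \<Rightarrow> real) set" where
  "Theta0 p = {\<beta>. \<exists>\<mu>::real. \<forall>v\<in>grid_V p. \<beta> v = \<mu>}"

definition Theta1 :: "nat \<Rightarrow> real \<Rightarrow> real \<Rightarrow> (vtx \<Rightarrow> real) set" where
  "Theta1 p \<rho> \<eta> = {\<beta>. \<exists>(\<mu>::real) (\<delta>::real) C. \<delta> \<noteq> 0 \<and> C \<in> cut_class p \<rho> \<and>
      (\<forall>v\<in>grid_V p. \<beta> v = \<mu> + \<delta> * indicator C v) \<and>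
      vnorm p (centre p \<beta>) \<ge> \<eta>}"

definition spectral_scan :: "nat \<Rightarrow> real \<Rightarrow> (vtx \<Rightarrow> real) \<Rightarrow> real" where
  "spectral_scan p \<rho> y = Sup {(vinner p x (centre p y))\<^sup>2 | x.
      quadL p x \<le> \<rho> \<and> vnorm p x \<le> 1 \<and> (\<Sum>v\<in>grid_V p. x v) = 0}"

text \<open>Law of y = beta + eps, eps ~ N(0, sigma^2 I_n): product of independent normals.\<close>
definition law_y :: "nat \<Rightarrow> real \<Rightarrow> (vtx \<Rightarrow> real) \<Rightarrow> (vtx \<Rightarrow> real) measure" where
  "law_y p \<sigma> \<beta> = PiM (grid_V p) (\<lambda>v. density lborel (normal_density (\<beta> v) \<sigma>))"

end

theory Submission
  imports Defs
begin

text \<open>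
  The centred data are centred noise e.  A feasible direction x
  (x^T L x <= rho, |x| <= 1, x orthogonal to 1) is split as x = A x + (x - A x), where A
  averages over square blocks of side b.  Since A is a self-adjoint contraction and the
  block Poincare inequality gives |x - A x|^2 <= 4 b^2 x^T L x, we get
  s <= 2 |A e|^2 + 8 b^2 rho |e|^2, whose mean is sigma^2 (2 #blocks + 8 b^2 rho n).
  Markov's inequality with b = floor (p^(1/4)) bounds the false alarm probability by
  O((n^(3/8) sigma / eta)^2).

  The normalised centred signal is feasible precisely because C lies in the
  cut class, and its inner product with the data is |centred beta| >= eta plus a
  N(0, sigma^2) variable; Chebyshev's inequality bounds the miss probability by
  4 sigma^2 / eta^2.
\<close>
section \<open>The lattice Laplacian as a Dirichlet form\<close>

lemma finite_grid_V [simp]: "finite (grid_V p)"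
  by (simp add: grid_V_def)

lemma card_grid_V: "card (grid_V p) = p^2"
  by (simp add: grid_V_def card_cartesian_product power2_eq_square)

lemma grid_W_sym: "grid_W p u v = grid_W p v u"
  unfolding grid_W_def grid_adj_def by (auto simp: abs_minus_commute)

lemma quadL_dirichlet:
  "quadL p x = (\<Sum>u\<in>grid_V p. \<Sum>v\<in>grid_V p. grid_W p u v * (x u - x v)^2) / 2"
proof -
  let ?V = "grid_V p"
  define deg where "deg u = (\<Sum>w\<in>?V. grid_W p u w)" for u
  have diag: "(\<Sum>v\<in>?V. x u * grid_D p u v * x v) = x u ^ 2 * deg u" if "u \<in> ?V" for u
  proof -
    have "x u * grid_D p u v * x v = (if v = u then x u ^ 2 * deg u else 0)" for v
      unfolding grid_D_def deg_def by (auto simp: power2_eq_square)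
    then show ?thesis using that by simp
  qed
  have quad: "quadL p x = (\<Sum>u\<in>?V. x u ^ 2 * deg u) - (\<Sum>u\<in>?V. \<Sum>v\<in>?V. grid_W p u v * x u * x v)"
  proof -
    have "quadL p x = (\<Sum>u\<in>?V. (\<Sum>v\<in>?V. x u * grid_D p u v * x v) - (\<Sum>v\<in>?V. grid_W p u v * x u * x v))"
      unfolding quadL_def grid_L_def by (simp add: algebra_simps sum_subtractf)
    also have "\<dots> = (\<Sum>u\<in>?V. x u ^ 2 * deg u - (\<Sum>v\<in>?V. grid_W p u v * x u * x v))"
      by (rule sum.cong) (auto simp: diag)
    finally show ?thesis by (simp add: sum_subtractf)
  qed
  have left: "(\<Sum>u\<in>?V. \<Sum>v\<in>?V. grid_W p u v * x u ^ 2) = (\<Sum>u\<in>?V. x u ^ 2 * deg u)"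
    unfolding deg_def by (simp add: sum_distrib_right mult.commute)
  have right: "(\<Sum>u\<in>?V. \<Sum>v\<in>?V. grid_W p u v * x v ^ 2) = (\<Sum>u\<in>?V. x u ^ 2 * deg u)"
    unfolding deg_def by (subst sum.swap) (simp add: sum_distrib_right mult.commute grid_W_sym)
  have "(\<Sum>u\<in>?V. \<Sum>v\<in>?V. grid_W p u v * (x u - x v)^2)
     = (\<Sum>u\<in>?V. \<Sum>v\<in>?V. grid_W p u v * x u ^ 2) + (\<Sum>u\<in>?V. \<Sum>v\<in>?V. grid_W p u v * x v ^ 2)
       - 2 * (\<Sum>u\<in>?V. \<Sum>v\<in>?V. grid_W p u v * x u * x v)"
    by (simp add: power2_diff algebra_simps sum.distrib sum_subtractf sum_distrib_left)
  then show ?thesis using quad left right by simp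
qed

text \<open>The Dirichlet form only sees differences, so it scales quadratically under
  affine changes of the signal.\<close>
lemma quadL_affine:
  assumes "\<And>u v. u \<in> grid_V p \<Longrightarrow> v \<in> grid_V p \<Longrightarrow> x u - x v = c * (z u - z v)"
  shows "quadL p x = c^2 * quadL p z"
proof -
  have "(\<Sum>u\<in>grid_V p. \<Sum>v\<in>grid_V p. grid_W p u v * (x u - x v)^2)
      = (\<Sum>u\<in>grid_V p. \<Sum>v\<in>grid_V p. c^2 * (grid_W p u v * (z u - z v)^2))"
    by (intro sum.cong refl) (simp add: assms power_mult_distrib)
  then show ?thesis unfolding quadL_dirichlet by (simp add: sum_distrib_left)
qed

lemma quadL_indicator:
  assumes C: "C \<subseteq> grid_V p"
  shows "quadL p (indicator C) = real (cut_size p C)"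
proof -
  let ?V = "grid_V p"
  let ?S = "{(u, v). u \<in> C \<and> v \<in> ?V - C \<and> grid_adj u v}"
  define out where "out u v = grid_W p u v * (indicator C u * (1 - indicator C v))" for u v
  have "real (cut_size p C) = (\<Sum>uv\<in>?V \<times> ?V. indicator ?S uv)"
  proof -
    have "?S \<subseteq> ?V \<times> ?V" using C by auto
    then have "(?V \<times> ?V) \<inter> ?S = ?S" by blast
    then show ?thesis
      unfolding cut_size_def indicator_def by (simp add: sum.If_cases Int_def)
  qed
  also have "\<dots> = (\<Sum>u\<in>?V. \<Sum>v\<in>?V. out u v)"
    unfolding sum.cartesian_product out_def
    by (intro sum.cong refl) (use C in \<open>auto simp: indicator_def grid_W_def split: prod.splits\<close>)
  finally have cut_out: "real (cut_size p C) = (\<Sum>u\<in>?V. \<Sum>v\<in>?V. out u v)" .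
  have cut_in: "(\<Sum>u\<in>?V. \<Sum>v\<in>?V. out v u) = real (cut_size p C)"
    unfolding cut_out out_def by (subst sum.swap) (simp add: grid_W_sym)
  have "quadL p (indicator C) = (\<Sum>u\<in>?V. \<Sum>v\<in>?V. out u v + out v u) / 2"
    unfolding quadL_dirichlet out_def
    by (intro arg_cong[where f="\<lambda>t. t / 2"] sum.cong refl) (auto simp: indicator_def grid_W_sym)
  then show ?thesis using cut_out cut_in by (simp add: sum.distrib)
qed

text \<open>Squared differences along the edge leaving u downwards (first coordinate + 1)
  and rightwards (second coordinate + 1); together they count every edge once.\<close>
definition down_diff2 :: "nat \<Rightarrow> (vtx \<Rightarrow> real) \<Rightarrow> vtx \<Rightarrow> real" where
  "down_diff2 p x u =
     (if (Suc (fst u), snd u) \<in> grid_V p then (x (Suc (fst u), snd u) - x u)^2 else 0)"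

definition right_diff2 :: "nat \<Rightarrow> (vtx \<Rightarrow> real) \<Rightarrow> vtx \<Rightarrow> real" where
  "right_diff2 p x u =
     (if (fst u, Suc (snd u)) \<in> grid_V p then (x (fst u, Suc (snd u)) - x u)^2 else 0)"

lemma down_diff2_nonneg: "down_diff2 p x u \<ge> 0"
  unfolding down_diff2_def by auto

lemma right_diff2_transpose: "right_diff2 p x u = down_diff2 p (x \<circ> prod.swap) (prod.swap u)"
  unfolding right_diff2_def down_diff2_def grid_V_def by auto

lemma edge_energy_le_quadL:
  "(\<Sum>u\<in>grid_V p. down_diff2 p x u + right_diff2 p x u) \<le> 2 * quadL p x"
proof -
  have "down_diff2 p x u + right_diff2 p x u \<le> (\<Sum>v\<in>grid_V p. grid_W p u v * (x u - x v)^2)"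
    if u: "u \<in> grid_V p" for u
  proof -
    obtain i j where u_ij: "u = (i, j)" by (cases u)
    define a where "a = (Suc i, j)"
    define b where "b = (i, Suc j)"
    define g where "g v = (if v = a then (x u - x v)^2 else 0) + (if v = b then (x u - x v)^2 else 0)" for v
    have "a \<noteq> b" "grid_adj u a" "grid_adj u b" unfolding grid_adj_def a_def b_def u_ij by auto
    then have "g v \<le> grid_W p u v * (x u - x v)^2" if "v \<in> grid_V p" for v
      using that u unfolding g_def grid_W_def by auto
    then have "(\<Sum>v\<in>grid_V p. g v) \<le> (\<Sum>v\<in>grid_V p. grid_W p u v * (x u - x v)^2)"
      by (rule sum_mono)
    moreover have "(\<Sum>v\<in>grid_V p. g v) = down_diff2 p x u + right_diff2 p x u"
      unfolding g_def sum.distrib down_diff2_def right_diff2_def u_ij a_def b_def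
      by (simp add: power2_commute)
    ultimately show ?thesis by simp
  qed
  then show ?thesis unfolding quadL_dirichlet by (simp add: sum_mono)
qed

lemma telescoping_sq_le:
  fixes f :: "nat \<Rightarrow> real"
  assumes "i1 \<le> i2"
  shows "(f i2 - f i1)^2 \<le> real (i2 - i1) * (\<Sum>i\<in>{i1..<i2}. (f (Suc i) - f i)^2)"
proof -
  have "f i2 - f i1 = (\<Sum>i\<in>{i1..<i2}. 1 * (f (Suc i) - f i))"
    using sum_Suc_diff'[OF assms, of f] by simp
  also have "(\<dots>)^2 \<le> (\<Sum>i\<in>{i1..<i2}. 1^2) * (\<Sum>i\<in>{i1..<i2}. (f (Suc i) - f i)^2)"
    by (rule Cauchy_Schwarz_ineq_sum)
  finally show ?thesis by simp
qed

lemma sum_class_sums_le: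
  fixes h :: "'a \<Rightarrow> real" and g :: "'a \<Rightarrow> 'b"
  assumes fin: "finite B" and small: "\<And>u'. u' \<in> B \<Longrightarrow> card {u\<in>B. g u = g u'} \<le> m"
    and nonneg: "\<And>u. h u \<ge> 0"
  shows "(\<Sum>u\<in>B. \<Sum>u'\<in>{u'\<in>B. g u' = g u}. h u') \<le> real m * (\<Sum>u'\<in>B. h u')"
proof -
  have "(\<Sum>u\<in>B. \<Sum>u'\<in>{u'\<in>B. g u' = g u}. h u') = (\<Sum>u\<in>B. \<Sum>u'\<in>B. if g u' = g u then h u' else 0)"
    using fin by (simp add: sum.inter_filter)
  also have "\<dots> = (\<Sum>u'\<in>B. \<Sum>u\<in>B. if g u = g u' then h u' else 0)"
    by (subst sum.swap) (simp add: eq_commute)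
  also have "\<dots> = (\<Sum>u'\<in>B. h u' * real (card {u\<in>B. g u = g u'}))"
    using fin by (simp add: sum.inter_filter[symmetric] mult.commute)
  also have "\<dots> \<le> (\<Sum>u'\<in>B. h u' * real m)"
    by (rule sum_mono) (use small nonneg in \<open>auto intro: mult_left_mono\<close>)
  finally show ?thesis by (simp add: sum_distrib_left mult.commute)
qed

lemma sq_diff_le_via: "((a::real) - c)^2 \<le> 2 * (a - w)^2 + 2 * (w - c)^2"
proof -
  have "2 * (a - w)^2 + 2 * (w - c)^2 - (a - c)^2 = (a - 2 * w + c)^2"
    by (simp add: power2_eq_square algebra_simps)
  then show ?thesis by (metis diff_ge_0_iff_ge zero_le_power2)
qed

lemma sq_sum_le: "((a::real) + c)^2 \<le> 2 * a^2 + 2 * c^2"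
  using sq_diff_le_via[of a "-c" 0] by simp

lemma sq_dev_from_mean_le:
  fixes x :: "'a \<Rightarrow> real"
  assumes "finite B" "B \<noteq> {}"
  shows "(x u - (\<Sum>w\<in>B. x w) / real (card B))^2 \<le> (\<Sum>v\<in>B. (x u - x v)^2) / real (card B)"
proof -
  define m where "m = real (card B)"
  have m: "m > 0" unfolding m_def using assms by (simp add: card_gt_0_iff)
  have "x u - (\<Sum>w\<in>B. x w) / m = (\<Sum>v\<in>B. 1 * (x u - x v)) / m"
    using m by (simp add: sum_subtractf m_def field_simps)
  then have "(x u - (\<Sum>w\<in>B. x w) / m)^2 = (\<Sum>v\<in>B. 1 * (x u - x v))^2 / m^2"
    by (simp add: power_divide)
  also have "\<dots> \<le> ((\<Sum>v\<in>B. 1^2) * (\<Sum>v\<in>B. (x u - x v)^2)) / m^2"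
    by (intro divide_right_mono Cauchy_Schwarz_ineq_sum) simp
  also have "\<dots> = (\<Sum>v\<in>B. (x u - x v)^2) / m"
    using m by (simp add: m_def power2_eq_square)
  finally show ?thesis unfolding m_def .
qed

lemma sq_sum_div_card_le:
  fixes x :: "'a \<Rightarrow> real"
  assumes "finite B"
  shows "(\<Sum>w\<in>B. x w)^2 / real (card B) \<le> (\<Sum>w\<in>B. (x w)^2)"
proof (cases "B = {}")
  case False
  then have m: "real (card B) > 0" using assms by (simp add: card_gt_0_iff)
  have "(\<Sum>w\<in>B. 1 * x w)^2 / real (card B) \<le> ((\<Sum>w\<in>B. 1^2) * (\<Sum>w\<in>B. (x w)^2)) / real (card B)"
    by (intro divide_right_mono Cauchy_Schwarz_ineq_sum) simp
  then show ?thesis using m by simp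
qed simp

section \<open>Block averaging\<close>

definition block_index :: "nat \<Rightarrow> vtx \<Rightarrow> nat \<times> nat" where
  "block_index b v = (fst v div b, snd v div b)"

definition grid_block :: "nat \<Rightarrow> nat \<Rightarrow> nat \<times> nat \<Rightarrow> vtx set" where
  "grid_block p b k = {w\<in>grid_V p. block_index b w = k}"

definition block_avg :: "nat \<Rightarrow> nat \<Rightarrow> (vtx \<Rightarrow> real) \<Rightarrow> vtx \<Rightarrow> real" where
  "block_avg p b x v =
     (\<Sum>w\<in>grid_block p b (block_index b v). x w) / real (card (grid_block p b (block_index b v)))"

lemma finite_grid_block [simp]: "finite (grid_block p b k)"
  unfolding grid_block_def by simp

lemma grid_block_nonempty: "k \<in> block_index b ` grid_V p \<Longrightarrow> grid_block p b k \<noteq> {}"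
  unfolding grid_block_def by auto

lemma block_avg_on_block:
  "v \<in> grid_block p b k \<Longrightarrow>
     block_avg p b x v = (\<Sum>w\<in>grid_block p b k. x w) / real (card (grid_block p b k))"
  unfolding block_avg_def grid_block_def by auto

lemma sum_over_blocks:
  "(\<Sum>v\<in>grid_V p. h v) = (\<Sum>k\<in>block_index b ` grid_V p. \<Sum>v\<in>grid_block p b k. h v)"
  unfolding grid_block_def by (rule sum.group[symmetric]) auto

lemma div_class_eq: "b > 0 \<Longrightarrow> {i::nat. i div b = m} = {m*b..<m*b+b}"
proof (intro set_eqI iffI)
  fix i assume b: "b > 0" and "i \<in> {i. i div b = m}"
  then have "i = m*b + i mod b" using div_mult_mod_eq[of i b] by simp
  moreover have "i mod b < b" using b by simp
  ultimately show "i \<in> {m*b..<m*b+b}" by auto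
next
  fix i assume "i \<in> {m*b..<m*b+b}"
  then show "i \<in> {i. i div b = m}" by (simp add: div_nat_eqI mult.commute)
qed

lemma card_block_column_le:
  assumes b: "b > 0"
  shows "card {u\<in>grid_block p b k. snd u = j} \<le> b"
proof -
  have "{u\<in>grid_block p b k. snd u = j} \<subseteq> (\<lambda>i. (i, j)) ` {i. i div b = fst k}"
    unfolding grid_block_def block_index_def by force
  then have "card {u\<in>grid_block p b k. snd u = j} \<le> card ((\<lambda>i. (i, j)) ` {i. i div b = fst k})"
    by (intro card_mono) (simp_all add: div_class_eq[OF b])
  also have "\<dots> \<le> card {i. i div b = fst k}"
    by (rule card_image_le) (simp add: div_class_eq[OF b])
  finally show ?thesis by (simp add: div_class_eq[OF b])
qed

text \<open>Within a block column, a squared difference is bounded by b times the vertical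
  energy of that block column (the path between the two vertices stays in the block).\<close>
lemma block_column_diff_le:
  assumes b: "b > 0" and m1: "(i1, j) \<in> grid_block p b k" and m2: "(i2, j) \<in> grid_block p b k"
  shows "(x (i1, j) - x (i2, j))^2
           \<le> real b * (\<Sum>u\<in>{u\<in>grid_block p b k. snd u = j}. down_diff2 p x u)"
proof -
  let ?col = "{u\<in>grid_block p b k. snd u = j}"
  have ordered: "(x (i2, j) - x (i1, j))^2 \<le> real b * (\<Sum>u\<in>?col. down_diff2 p x u)"
    if le: "i1 \<le> i2" and m1: "(i1, j) \<in> grid_block p b k" and m2: "(i2, j) \<in> grid_block p b k"
    for i1 i2
  proof -
    let ?S = "\<Sum>i\<in>{i1..<i2}. (x (Suc i, j) - x (i, j))^2"
    have cls: "i1 div b = fst k" "i2 div b = fst k" "j div b = snd k" and bnd: "i2 < p" "j < p"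
      using m1 m2 by (auto simp: grid_block_def block_index_def grid_V_def)
    have "i1 \<in> {fst k * b..<fst k * b + b}" "i2 \<in> {fst k * b..<fst k * b + b}"
      using cls(1,2) div_class_eq[OF b, of "fst k"] by blast+
    then have short: "i2 - i1 \<le> b" by auto
    have inside: "(\<lambda>i. (i, j)) ` {i1..<i2} \<subseteq> ?col"
    proof -
      have "(i, j) \<in> grid_block p b k" if i: "i \<in> {i1..<i2}" for i
      proof -
        from i have "i1 div b \<le> i div b" "i div b \<le> i2 div b" by (auto intro: div_le_mono)
        then show ?thesis using cls bnd i by (auto simp: grid_block_def block_index_def grid_V_def)
      qed
      then show ?thesis by auto
    qed
    have "?S = (\<Sum>i\<in>{i1..<i2}. down_diff2 p x (i, j))"
      by (rule sum.cong) (use bnd in \<open>auto simp: down_diff2_def grid_V_def\<close>)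
    also have "\<dots> = (\<Sum>u\<in>(\<lambda>i. (i, j)) ` {i1..<i2}. down_diff2 p x u)"
      by (subst sum.reindex) (auto simp: inj_on_def)
    also have "\<dots> \<le> (\<Sum>u\<in>?col. down_diff2 p x u)"
      by (rule sum_mono2[OF _ inside]) (auto simp: down_diff2_nonneg)
    finally have path_energy: "?S \<le> (\<Sum>u\<in>?col. down_diff2 p x u)" .
    have "(x (i2, j) - x (i1, j))^2 \<le> real (i2 - i1) * ?S"
      using telescoping_sq_le[OF le, of "\<lambda>i. x (i, j)"] by simp
    also have "\<dots> \<le> real b * (\<Sum>u\<in>?col. down_diff2 p x u)"
      using short path_energy by (intro mult_mono) (auto simp: sum_nonneg)
    finally show ?thesis .
  qed
  show ?thesis
    using ordered[OF _ m1 m2] ordered[OF _ m2 m1] by (cases "i1 \<le> i2") (simp_all add: power2_commute)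
qed

text \<open>Transposing the lattice maps blocks to blocks; this turns the column estimates into
  row estimates.\<close>
lemma swap_mem_grid_block:
  "prod.swap u \<in> grid_block p b k \<longleftrightarrow> u \<in> grid_block p b (prod.swap k)"
  unfolding grid_block_def block_index_def grid_V_def by (cases u; cases k) auto

lemma block_row_eq_swap_column:
  "{u\<in>grid_block p b k. fst u = i} = prod.swap ` {u\<in>grid_block p b (prod.swap k). snd u = i}"
proof (intro set_eqI iffI)
  fix u assume "u \<in> {u\<in>grid_block p b k. fst u = i}"
  then show "u \<in> prod.swap ` {u\<in>grid_block p b (prod.swap k). snd u = i}"
    by (intro image_eqI[of _ _ "prod.swap u"]) (simp_all add: swap_mem_grid_block)
next
  fix u assume "u \<in> prod.swap ` {u\<in>grid_block p b (prod.swap k). snd u = i}"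
  then obtain v where "v \<in> grid_block p b (prod.swap k)" "snd v = i" "u = prod.swap v" by auto
  then show "u \<in> {u\<in>grid_block p b k. fst u = i}"
    using swap_mem_grid_block[of v p b k] by simp
qed

lemma card_block_row_le:
  assumes b: "b > 0"
  shows "card {u\<in>grid_block p b k. fst u = i} \<le> b"
proof -
  have "card {u\<in>grid_block p b k. fst u = i} \<le> card {u\<in>grid_block p b (prod.swap k). snd u = i}"
    unfolding block_row_eq_swap_column by (rule card_image_le) simp
  also have "\<dots> \<le> b" by (rule card_block_column_le[OF b])
  finally show ?thesis .
qed

lemma block_row_diff_le:
  assumes b: "b > 0" and m1: "(i, j1) \<in> grid_block p b k" and m2: "(i, j2) \<in> grid_block p b k"
  shows "(x (i, j1) - x (i, j2))^2
           \<le> real b * (\<Sum>u\<in>{u\<in>grid_block p b k. fst u = i}. right_diff2 p x u)"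
proof -
  let ?col = "{u\<in>grid_block p b (prod.swap k). snd u = i}"
  have "(j1, i) \<in> grid_block p b (prod.swap k)" "(j2, i) \<in> grid_block p b (prod.swap k)"
    using m1 m2 swap_mem_grid_block[of "(j1, i)" p b] swap_mem_grid_block[of "(j2, i)" p b] by simp_all
  then have "(x (i, j1) - x (i, j2))^2 \<le> real b * (\<Sum>u\<in>?col. down_diff2 p (x \<circ> prod.swap) u)"
    using block_column_diff_le[OF b, of j1 i p "prod.swap k" j2 "x \<circ> prod.swap"] by simp
  also have "(\<Sum>u\<in>?col. down_diff2 p (x \<circ> prod.swap) u) = (\<Sum>u\<in>prod.swap ` ?col. right_diff2 p x u)"
    by (subst sum.reindex) (auto simp: right_diff2_transpose)
  finally show ?thesis unfolding block_row_eq_swap_column .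
qed

text \<open>Any two vertices u, v of a block are joined
  inside it by a column segment to (fst v, snd u) followed by a row segment; each column and
  each row of the block is used by at most b vertices u, resp. v.\<close>
lemma block_poincare:
  assumes b: "b > 0" and ne: "grid_block p b k \<noteq> {}"
  shows "(\<Sum>u\<in>grid_block p b k. (x u - (\<Sum>w\<in>grid_block p b k. x w) / real (card (grid_block p b k)))^2)
         \<le> 2 * real b ^ 2 * (\<Sum>u\<in>grid_block p b k. down_diff2 p x u + right_diff2 p x u)"
proof -
  define B where "B = grid_block p b k"
  define m where "m = real (card B)"
  define Col where "Col j = (\<Sum>u'\<in>{u'\<in>B. snd u' = j}. down_diff2 p x u')" for j
  define Row where "Row i = (\<Sum>u'\<in>{u'\<in>B. fst u' = i}. right_diff2 p x u')" for i
  have fin: "finite B" unfolding B_def by simp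
  have m0: "m > 0" unfolding m_def B_def using ne by (simp add: card_gt_0_iff)
  have pair: "(x u - x v)^2 \<le> 2 * real b * Col (snd u) + 2 * real b * Row (fst v)"
    if u: "u \<in> B" and v: "v \<in> B" for u v
  proof -
    obtain i1 j1 where u_ij: "u = (i1, j1)" by (cases u)
    obtain i2 j2 where v_ij: "v = (i2, j2)" by (cases v)
    have corner: "(i2, j1) \<in> B"
      using u v unfolding u_ij v_ij B_def grid_block_def block_index_def grid_V_def by auto
    have "(x (i1, j1) - x (i2, j1))^2 \<le> real b * Col j1"
      unfolding Col_def B_def using u corner by (intro block_column_diff_le[OF b]) (auto simp: u_ij B_def)
    moreover have "(x (i2, j1) - x (i2, j2))^2 \<le> real b * Row i2"
      unfolding Row_def B_def using v corner by (intro block_row_diff_le[OF b]) (auto simp: v_ij B_def)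
    ultimately show ?thesis
      using sq_diff_le_via[of "x (i1, j1)" "x (i2, j2)" "x (i2, j1)"] unfolding u_ij v_ij by simp
  qed
  have columns: "(\<Sum>u\<in>B. Col (snd u)) \<le> real b * (\<Sum>u\<in>B. down_diff2 p x u)"
    unfolding Col_def
    by (rule sum_class_sums_le[OF fin]) (use card_block_column_le[OF b] down_diff2_nonneg in \<open>auto simp: B_def\<close>)
  have rows: "(\<Sum>u\<in>B. Row (fst u)) \<le> real b * (\<Sum>u\<in>B. right_diff2 p x u)"
    unfolding Row_def
    by (rule sum_class_sums_le[OF fin]) (use card_block_row_le[OF b] in \<open>auto simp: B_def right_diff2_def\<close>)
  have mean_split: "(\<Sum>v\<in>B. F + G v) / m = F + (\<Sum>v\<in>B. G v) / m" for F :: real and G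
    using m0 by (simp add: sum.distrib m_def field_simps)
  have "(\<Sum>u\<in>B. (x u - (\<Sum>w\<in>B. x w) / m)^2) \<le> (\<Sum>u\<in>B. (\<Sum>v\<in>B. (x u - x v)^2) / m)"
    unfolding m_def using fin ne by (intro sum_mono sq_dev_from_mean_le) (auto simp: B_def)
  also have "\<dots> \<le> (\<Sum>u\<in>B. (\<Sum>v\<in>B. 2 * real b * Col (snd u) + 2 * real b * Row (fst v)) / m)"
    by (intro sum_mono divide_right_mono) (use pair m0 in auto)
  also have "\<dots> = (\<Sum>u\<in>B. 2 * real b * Col (snd u)) + m * ((\<Sum>v\<in>B. 2 * real b * Row (fst v)) / m)"
    unfolding mean_split by (simp add: sum.distrib m_def)
  also have "\<dots> = 2 * real b * (\<Sum>u\<in>B. Col (snd u)) + 2 * real b * (\<Sum>v\<in>B. Row (fst v))"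
    using m0 by (simp add: sum_distrib_left[symmetric])
  also have "\<dots> \<le> 2 * real b * (real b * (\<Sum>u\<in>B. down_diff2 p x u)) + 2 * real b * (real b * (\<Sum>u\<in>B. right_diff2 p x u))"
    using columns rows by (intro add_mono mult_left_mono) auto
  finally show ?thesis
    by (simp add: B_def[symmetric] m_def[symmetric] sum.distrib power2_eq_square algebra_simps)
qed

lemma block_avg_poincare:
  assumes b: "b > 0"
  shows "(\<Sum>v\<in>grid_V p. (x v - block_avg p b x v)^2) \<le> 4 * real b ^ 2 * quadL p x"
proof -
  have "(\<Sum>v\<in>grid_V p. (x v - block_avg p b x v)^2)
      \<le> (\<Sum>v\<in>grid_V p. 2 * real b ^ 2 * (down_diff2 p x v + right_diff2 p x v))"
    unfolding sum_over_blocks[of _ _ b]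
  proof (rule sum_mono)
    fix k assume k: "k \<in> block_index b ` grid_V p"
    have "(\<Sum>v\<in>grid_block p b k. (x v - block_avg p b x v)^2)
        = (\<Sum>v\<in>grid_block p b k. (x v - (\<Sum>w\<in>grid_block p b k. x w) / real (card (grid_block p b k)))^2)"
      by (rule sum.cong) (simp_all add: block_avg_on_block)
    then show "(\<Sum>v\<in>grid_block p b k. (x v - block_avg p b x v)^2)
        \<le> (\<Sum>v\<in>grid_block p b k. 2 * real b ^ 2 * (down_diff2 p x v + right_diff2 p x v))"
      using block_poincare[OF b grid_block_nonempty[OF k], of x] by (simp add: sum_distrib_left)
  qed
  also have "\<dots> \<le> 2 * real b ^ 2 * (2 * quadL p x)"
    unfolding sum_distrib_left[symmetric] using edge_energy_le_quadL by (intro mult_left_mono) auto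
  finally show ?thesis by simp
qed

text \<open>Block averaging is a contraction (Jensen's inequality on each block) ...\<close>
lemma block_avg_contraction:
  "(\<Sum>v\<in>grid_V p. (block_avg p b x v)^2) \<le> (\<Sum>v\<in>grid_V p. (x v)^2)"
  unfolding sum_over_blocks[of _ _ b]
proof (rule sum_mono)
  fix k
  have "(\<Sum>v\<in>grid_block p b k. (block_avg p b x v)^2)
      = real (card (grid_block p b k)) * ((\<Sum>w\<in>grid_block p b k. x w) / real (card (grid_block p b k)))^2"
    by (simp add: block_avg_on_block)
  also have "\<dots> = (\<Sum>w\<in>grid_block p b k. x w)^2 / real (card (grid_block p b k))"
    by (simp add: power2_eq_square)
  also have "\<dots> \<le> (\<Sum>w\<in>grid_block p b k. (x w)^2)"
    by (rule sq_sum_div_card_le) simp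
  finally show "(\<Sum>v\<in>grid_block p b k. (block_avg p b x v)^2) \<le> (\<Sum>v\<in>grid_block p b k. (x v)^2)" .
qed

text \<open>... and self-adjoint: it is the orthogonal projection onto blockwise constant vectors.\<close>
lemma block_avg_selfadjoint:
  "(\<Sum>v\<in>grid_V p. block_avg p b x v * z v) = (\<Sum>v\<in>grid_V p. block_avg p b x v * block_avg p b z v)"
  unfolding sum_over_blocks[of _ _ b]
proof (rule sum.cong)
  fix k assume k: "k \<in> block_index b ` grid_V p"
  define B where "B = grid_block p b k"
  have m: "real (card B) > 0" using grid_block_nonempty[OF k] unfolding B_def by (simp add: card_gt_0_iff)
  have "(\<Sum>v\<in>B. block_avg p b x v * z v) = (\<Sum>w\<in>B. x w) / real (card B) * (\<Sum>w\<in>B. z w)"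
    unfolding B_def by (simp add: block_avg_on_block sum_distrib_left)
  also have "\<dots> = (\<Sum>v\<in>B. block_avg p b x v * block_avg p b z v)"
    using m unfolding B_def by (simp add: block_avg_on_block)
  finally show "(\<Sum>v\<in>grid_block p b k. block_avg p b x v * z v)
      = (\<Sum>v\<in>grid_block p b k. block_avg p b x v * block_avg p b z v)" unfolding B_def .
qed simp

lemma card_blocks_le:
  "card (block_index b ` grid_V p) \<le> (p div b + 1)^2"
proof -
  have "block_index b ` grid_V p \<subseteq> {..<p div b + 1} \<times> {..<p div b + 1}"
    unfolding block_index_def grid_V_def by (auto simp: less_Suc_eq_le div_le_mono)
  then have "card (block_index b ` grid_V p) \<le> card ({..<p div b + 1} \<times> {..<p div b + 1})"
    by (intro card_mono) auto
  then show ?thesis by (simp add: card_cartesian_product power2_eq_square)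
qed

text \<open>Block averaging as a linear map with weights w \<mapsto> 1/|block of v| on the block of v;
  each row of its matrix has squared norm 1/|block|, and these add up to the number of
  blocks (the trace of the projection).\<close>
definition block_weight :: "nat \<Rightarrow> nat \<Rightarrow> vtx \<Rightarrow> vtx \<Rightarrow> real" where
  "block_weight p b v w =
     (if w \<in> grid_block p b (block_index b v) then 1 / real (card (grid_block p b (block_index b v))) else 0)"

lemma block_avg_linear: "block_avg p b z v = (\<Sum>w\<in>grid_V p. block_weight p b v w * z w)"
proof -
  let ?B = "grid_block p b (block_index b v)"
  have sub: "?B \<subseteq> grid_V p" unfolding grid_block_def by auto
  have "(\<Sum>w\<in>grid_V p. block_weight p b v w * z w)
      = (\<Sum>w\<in>grid_V p. if w \<in> ?B then z w / real (card ?B) else 0)"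
    unfolding block_weight_def by (rule sum.cong) auto
  also have "\<dots> = (\<Sum>w\<in>?B. z w / real (card ?B))"
    using sub by (simp add: sum.inter_restrict[symmetric] Int_absorb1)
  finally show ?thesis unfolding block_avg_def by (simp add: sum_divide_distrib)
qed

lemma sum_block_weight_sq:
  "(\<Sum>w\<in>grid_V p. (block_weight p b v w)^2) = 1 / real (card (grid_block p b (block_index b v)))"
proof -
  let ?B = "grid_block p b (block_index b v)"
  have sub: "?B \<subseteq> grid_V p" unfolding grid_block_def by auto
  have "(\<Sum>w\<in>grid_V p. (block_weight p b v w)^2)
      = (\<Sum>w\<in>grid_V p. if w \<in> ?B then (1 / real (card ?B))^2 else 0)"
    unfolding block_weight_def by (rule sum.cong) auto
  also have "\<dots> = real (card ?B) * (1 / real (card ?B))^2"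
    using sub by (simp add: sum.inter_restrict[symmetric] Int_absorb1)
  finally show ?thesis by (simp add: power2_eq_square)
qed

lemma sum_inv_block_card:
  "(\<Sum>v\<in>grid_V p. 1 / real (card (grid_block p b (block_index b v)))) = real (card (block_index b ` grid_V p))"
proof -
  have "(\<Sum>v\<in>grid_block p b k. 1 / real (card (grid_block p b (block_index b v)))) = 1"
    if k: "k \<in> block_index b ` grid_V p" for k
  proof -
    have "(\<Sum>v\<in>grid_block p b k. 1 / real (card (grid_block p b (block_index b v))))
        = (\<Sum>v\<in>grid_block p b k. 1 / real (card (grid_block p b k)))"
      by (rule sum.cong) (auto simp: grid_block_def)
    then show ?thesis using grid_block_nonempty[OF k] by simp
  qed
  then show ?thesis unfolding sum_over_blocks[of _ _ b] by simp
qed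

section \<open>The spectral scan statistic as a supremum\<close>

definition scan_set :: "nat \<Rightarrow> real \<Rightarrow> (vtx \<Rightarrow> real) set" where
  "scan_set p \<rho> = {x. quadL p x \<le> \<rho> \<and> vnorm p x \<le> 1 \<and> (\<Sum>v\<in>grid_V p. x v) = 0}"

lemma spectral_scan_eq_Sup:
  "spectral_scan p \<rho> y = Sup ((\<lambda>x. (vinner p x (centre p y))^2) ` scan_set p \<rho>)"
  unfolding spectral_scan_def scan_set_def by (rule arg_cong[where f=Sup]) auto

lemma vinner_Cauchy_Schwarz: "(vinner p x z)^2 \<le> vinner p x x * vinner p z z"
  unfolding vinner_def using Cauchy_Schwarz_ineq_sum[of x z "grid_V p"] by (simp add: power2_eq_square)

lemma vinner_self_nonneg: "vinner p x x \<ge> 0"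
  unfolding vinner_def by (simp add: sum_nonneg)

lemma vnorm_le_1_iff: "vnorm p x \<le> 1 \<longleftrightarrow> vinner p x x \<le> 1"
  unfolding vnorm_def using vinner_self_nonneg[of p x] by simp

lemma zero_in_scan_set: "\<rho> \<ge> 0 \<Longrightarrow> (\<lambda>_. 0) \<in> scan_set p \<rho>"
  unfolding scan_set_def quadL_def vnorm_def vinner_def by simp

text \<open>Feasible directions are unit-bounded, so the statistic is bounded by |centred y|^2.\<close>
lemma scan_set_inner_sq_le: "x \<in> scan_set p \<rho> \<Longrightarrow> (vinner p x z)^2 \<le> vinner p z z"
proof -
  assume "x \<in> scan_set p \<rho>"
  then have "vinner p x x \<le> 1" unfolding scan_set_def vnorm_le_1_iff by simp
  then have "vinner p x x * vinner p z z \<le> 1 * vinner p z z"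
    by (intro mult_right_mono vinner_self_nonneg)
  then show ?thesis using vinner_Cauchy_Schwarz[of p x z] by simp
qed

lemma bdd_above_scan_values: "bdd_above ((\<lambda>x. (vinner p x (centre p y))^2) ` scan_set p \<rho>)"
  using scan_set_inner_sq_le by (auto intro!: bdd_aboveI2)

lemma spectral_scan_ge:
  "x \<in> scan_set p \<rho> \<Longrightarrow> (vinner p x (centre p y))^2 \<le> spectral_scan p \<rho> y"
  unfolding spectral_scan_eq_Sup by (rule cSup_upper) (use bdd_above_scan_values in auto)

lemma spectral_scan_le:
  "\<rho> \<ge> 0 \<Longrightarrow> (\<And>x. x \<in> scan_set p \<rho> \<Longrightarrow> (vinner p x (centre p y))^2 \<le> B) \<Longrightarrow> spectral_scan p \<rho> y \<le> B"
  unfolding spectral_scan_eq_Sup by (rule cSup_least) (use zero_in_scan_set[of \<rho> p] in auto)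

lemma spectral_scan_gt_iff:
  "\<rho> \<ge> 0 \<Longrightarrow> spectral_scan p \<rho> y > t \<longleftrightarrow> (\<exists>x\<in>scan_set p \<rho>. (vinner p x (centre p y))^2 > t)"
  unfolding spectral_scan_eq_Sup
  by (subst less_cSup_iff) (use zero_in_scan_set[of \<rho> p] bdd_above_scan_values in auto)

lemma vinner_centre: "(\<Sum>v\<in>grid_V p. x v) = 0 \<Longrightarrow> vinner p x (centre p y) = vinner p x y"
  unfolding vinner_def centre_def
  by (simp add: right_diff_distrib sum_subtractf sum_distrib_right[symmetric])

text \<open>Deterministic core of the null analysis: split a feasible x as A x + (x - A x).  The
  first part sees z only through A z, since A is a self-adjoint contraction; the second is
  small by the Poincare inequality, as x^T L x <= rho.\<close>
lemma scan_set_inner_sq_le_block: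
  assumes b: "b > 0" and x: "x \<in> scan_set p \<rho>"
  shows "(vinner p x z)^2
           \<le> 2 * (\<Sum>v\<in>grid_V p. (block_avg p b z v)^2) + 8 * real b ^ 2 * \<rho> * (\<Sum>v\<in>grid_V p. (z v)^2)"
proof -
  let ?V = "grid_V p"
  define A where "A = (\<Sum>v\<in>?V. block_avg p b x v * z v)"
  define C where "C = (\<Sum>v\<in>?V. (x v - block_avg p b x v) * z v)"
  have unit: "(\<Sum>v\<in>?V. (x v)^2) \<le> 1" and smooth: "quadL p x \<le> \<rho>"
    using x unfolding scan_set_def vnorm_le_1_iff vinner_def by (auto simp: power2_eq_square)
  have split: "vinner p x z = A + C"
    unfolding vinner_def A_def C_def by (simp add: sum.distrib[symmetric] algebra_simps)
  have "A^2 = (\<Sum>v\<in>?V. block_avg p b x v * block_avg p b z v)^2"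
    by (simp only: A_def block_avg_selfadjoint[of p b x z])
  also have "\<dots> \<le> (\<Sum>v\<in>?V. (block_avg p b x v)^2) * (\<Sum>v\<in>?V. (block_avg p b z v)^2)"
    by (rule Cauchy_Schwarz_ineq_sum)
  also have "\<dots> \<le> 1 * (\<Sum>v\<in>?V. (block_avg p b z v)^2)"
    using block_avg_contraction[of p b x] unit by (intro mult_right_mono) (auto simp: sum_nonneg)
  finally have A_sq: "A^2 \<le> (\<Sum>v\<in>?V. (block_avg p b z v)^2)" by simp
  have "(\<Sum>v\<in>?V. (x v - block_avg p b x v)^2) \<le> 4 * real b ^ 2 * quadL p x"
    by (rule block_avg_poincare[OF b])
  also have "\<dots> \<le> 4 * real b ^ 2 * \<rho>"
    using smooth by (intro mult_left_mono) auto
  finally have rough: "(\<Sum>v\<in>?V. (x v - block_avg p b x v)^2) \<le> 4 * real b ^ 2 * \<rho>" .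
  have "C^2 \<le> (\<Sum>v\<in>?V. (x v - block_avg p b x v)^2) * (\<Sum>v\<in>?V. (z v)^2)"
    unfolding C_def by (rule Cauchy_Schwarz_ineq_sum)
  also have "\<dots> \<le> (4 * real b ^ 2 * \<rho>) * (\<Sum>v\<in>?V. (z v)^2)"
    using rough by (intro mult_right_mono) (auto simp: sum_nonneg)
  finally have C_sq: "C^2 \<le> 4 * real b ^ 2 * \<rho> * (\<Sum>v\<in>?V. (z v)^2)" .
  show ?thesis using sq_sum_le[of A C] A_sq C_sq split by simp
qed

section \<open>Moments of independent Gaussian vectors\<close>

definition gauss_vec :: "'i set \<Rightarrow> real \<Rightarrow> ('i \<Rightarrow> real) \<Rightarrow> ('i \<Rightarrow> real) measure" where
  "gauss_vec I \<sigma> \<beta> = PiM I (\<lambda>v. density lborel (normal_density (\<beta> v) \<sigma>))"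

lemma law_y_eq_gauss_vec: "law_y p \<sigma> \<beta> = gauss_vec (grid_V p) \<sigma> \<beta>"
  unfolding law_y_def gauss_vec_def ..

lemma prob_space_gauss_vec: "\<sigma> > 0 \<Longrightarrow> prob_space (gauss_vec I \<sigma> \<beta>)"
  unfolding gauss_vec_def by (intro prob_space_PiM prob_space_normal_density)

lemma sets_gauss_vec: "sets (gauss_vec I \<sigma> \<beta>) = sets (PiM I (\<lambda>v. borel :: real measure))"
  unfolding gauss_vec_def by (rule sets_PiM_cong) auto

lemma normal_centred_moment:
  assumes s: "\<sigma> > 0"
  shows "integrable (density lborel (normal_density \<mu> \<sigma>)) (\<lambda>t. (t - \<mu>)^k)"
    and "integral\<^sup>L (density lborel (normal_density \<mu> \<sigma>)) (\<lambda>t. (t - \<mu>)^0) = 1"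
    and "integral\<^sup>L (density lborel (normal_density \<mu> \<sigma>)) (\<lambda>t. (t - \<mu>)^1) = 0"
    and "integral\<^sup>L (density lborel (normal_density \<mu> \<sigma>)) (\<lambda>t. (t - \<mu>)^2) = \<sigma>^2"
proof -
  have dens: "integral\<^sup>L (density lborel (normal_density \<mu> \<sigma>)) (\<lambda>t. (t - \<mu>)^j)
      = integral\<^sup>L lborel (\<lambda>t. normal_density \<mu> \<sigma> t * (t - \<mu>)^j)" for j
    by (subst integral_density) auto
  show "integrable (density lborel (normal_density \<mu> \<sigma>)) (\<lambda>t. (t - \<mu>)^k)"
    using integrable_normal_moment[of \<sigma> \<mu> k] s by (subst integrable_density) auto
  show "integral\<^sup>L (density lborel (normal_density \<mu> \<sigma>)) (\<lambda>t. (t - \<mu>)^0) = 1"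
    unfolding dens using s by auto
  show "integral\<^sup>L (density lborel (normal_density \<mu> \<sigma>)) (\<lambda>t. (t - \<mu>)^1) = 0"
    unfolding dens using s by (auto intro: integral_normal_moment_odd[where k=0, simplified])
  show "integral\<^sup>L (density lborel (normal_density \<mu> \<sigma>)) (\<lambda>t. (t - \<mu>)^2) = \<sigma>^2"
    unfolding dens using integral_normal_moment_even[of \<sigma> \<mu> 1] s by (auto simp: power2_eq_square)
qed

text \<open>The coordinates are uncorrelated with variance sigma^2 (via Fubini for products).\<close>
lemma gauss_vec_covariance:
  assumes s: "\<sigma> > 0" and I: "finite I" and u: "u \<in> I" and v: "v \<in> I"
  shows "integrable (gauss_vec I \<sigma> \<beta>) (\<lambda>y. (y u - \<beta> u) * (y v - \<beta> v))"
    and "integral\<^sup>L (gauss_vec I \<sigma> \<beta>) (\<lambda>y. (y u - \<beta> u) * (y v - \<beta> v)) = (if u = v then \<sigma>^2 else 0)"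
proof -
  define N where "N w = density lborel (normal_density (\<beta> w) \<sigma>)" for w
  interpret product_sigma_finite N
    unfolding product_sigma_finite_def N_def using s
    by (auto intro!: prob_space_imp_sigma_finite prob_space_normal_density)
  define deg where "deg w = (if w = u then 1 else 0) + (if w = v then 1 else (0::nat))" for w
  define f where "f w t = (t - \<beta> w) ^ deg w" for w t
  have law: "gauss_vec I \<sigma> \<beta> = PiM I N" unfolding gauss_vec_def N_def ..
  have f_int: "integrable (N w) (f w)" for w
    unfolding N_def f_def by (rule normal_centred_moment(1)[OF s])
  have prod_eq: "(\<Prod>w\<in>I. f w (y w)) = (y u - \<beta> u) * (y v - \<beta> v)" for y
  proof -
    have "(\<Prod>w\<in>I. f w (y w))
        = (\<Prod>w\<in>I. (if w = u then y w - \<beta> w else 1) * (if w = v then y w - \<beta> w else 1))"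
      unfolding f_def deg_def by (rule prod.cong) (auto simp: power_add)
    also have "\<dots> = (y u - \<beta> u) * (y v - \<beta> v)"
      using u v I by (simp add: prod.distrib)
    finally show ?thesis .
  qed
  have "integrable (PiM I N) (\<lambda>y. \<Prod>w\<in>I. f w (y w))"
    by (rule product_integrable_prod) (auto intro: f_int I)
  then show "integrable (gauss_vec I \<sigma> \<beta>) (\<lambda>y. (y u - \<beta> u) * (y v - \<beta> v))"
    unfolding law prod_eq .
  have "integral\<^sup>L (PiM I N) (\<lambda>y. \<Prod>w\<in>I. f w (y w)) = (\<Prod>w\<in>I. integral\<^sup>L (N w) (f w))"
    by (rule product_integral_prod) (auto intro: f_int I)
  also have "\<dots> = (if u = v then \<sigma>^2 else 0)"
  proof (cases "u = v")
    case True
    have "(\<Prod>w\<in>I. integral\<^sup>L (N w) (f w)) = (\<Prod>w\<in>I. if w = u then \<sigma>^2 else 1)"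
    proof (rule prod.cong)
      fix w assume "w \<in> I"
      show "integral\<^sup>L (N w) (f w) = (if w = u then \<sigma>^2 else 1)"
        using normal_centred_moment(2,4)[OF s, of "\<beta> w"] True
        unfolding N_def f_def deg_def by (auto simp: numeral_2_eq_2)
    qed simp
    then show ?thesis using True u I by simp
  next
    case False
    have "integral\<^sup>L (N u) (f u) = 0"
      using normal_centred_moment(3)[OF s] False unfolding N_def f_def deg_def by simp
    then show ?thesis using False u I by (auto intro: prod_zero)
  qed
  finally show "integral\<^sup>L (gauss_vec I \<sigma> \<beta>) (\<lambda>y. (y u - \<beta> u) * (y v - \<beta> v)) = (if u = v then \<sigma>^2 else 0)"
    unfolding law prod_eq .
qed

lemma gauss_vec_linear_moment:
  assumes s: "\<sigma> > 0" and I: "finite I"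
  shows "integrable (gauss_vec I \<sigma> \<beta>) (\<lambda>y. (\<Sum>v\<in>I. a v * (y v - \<beta> v))^2)"
    and "integral\<^sup>L (gauss_vec I \<sigma> \<beta>) (\<lambda>y. (\<Sum>v\<in>I. a v * (y v - \<beta> v))^2) = \<sigma>^2 * (\<Sum>v\<in>I. (a v)^2)"
proof -
  let ?M = "gauss_vec I \<sigma> \<beta>"
  define cov_term where "cov_term u v y = a u * a v * ((y u - \<beta> u) * (y v - \<beta> v))" for u v y
  have expand: "(\<lambda>y. (\<Sum>v\<in>I. a v * (y v - \<beta> v))^2) = (\<lambda>y. \<Sum>u\<in>I. \<Sum>v\<in>I. cov_term u v y)"
    unfolding cov_term_def by (simp add: power2_eq_square sum_product algebra_simps)
  have int_term: "integrable ?M (cov_term u v)" if "u \<in> I" "v \<in> I" for u v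
    unfolding cov_term_def using gauss_vec_covariance(1)[OF s I that] by (rule integrable_mult_right)
  then show "integrable ?M (\<lambda>y. (\<Sum>v\<in>I. a v * (y v - \<beta> v))^2)"
    unfolding expand by (auto intro!: integrable_sum)
  have "integral\<^sup>L ?M (\<lambda>y. \<Sum>u\<in>I. \<Sum>v\<in>I. cov_term u v y)
      = (\<Sum>u\<in>I. integral\<^sup>L ?M (\<lambda>y. \<Sum>v\<in>I. cov_term u v y))"
    by (rule Bochner_Integration.integral_sum) (use int_term in \<open>auto intro!: integrable_sum\<close>)
  also have "\<dots> = (\<Sum>u\<in>I. \<Sum>v\<in>I. integral\<^sup>L ?M (cov_term u v))"
    by (intro sum.cong refl Bochner_Integration.integral_sum) (use int_term in auto)
  also have "\<dots> = (\<Sum>u\<in>I. \<Sum>v\<in>I. a u * a v * (if u = v then \<sigma>^2 else 0))"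
    unfolding cov_term_def by (intro sum.cong refl) (simp add: gauss_vec_covariance(2)[OF s I])
  also have "\<dots> = \<sigma>^2 * (\<Sum>v\<in>I. (a v)^2)"
    using I by (simp add: sum_distrib_left power2_eq_square if_distrib cong: if_cong) (simp add: algebra_simps)
  finally show "integral\<^sup>L ?M (\<lambda>y. (\<Sum>v\<in>I. a v * (y v - \<beta> v))^2) = \<sigma>^2 * (\<Sum>v\<in>I. (a v)^2)"
    unfolding expand .
qed

section \<open>Measurability of the rejection region\<close>

lemma measurable_linear_noise:
  "(\<lambda>y. \<Sum>v\<in>grid_V p. a v * (y v - c v)) \<in> borel_measurable (law_y p \<sigma> \<beta>)"
  unfolding law_y_eq_gauss_vec measurable_cong_sets[OF sets_gauss_vec refl] by measurable

lemma measurable_centred_dist: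
  "(\<lambda>y. \<Sum>v\<in>grid_V p. (centre p y v - q v)^2) \<in> borel_measurable (law_y p \<sigma> \<beta>)"
  unfolding law_y_eq_gauss_vec measurable_cong_sets[OF sets_gauss_vec refl] centre_def vmean_def
  by measurable

lemma rational_approx:
  fixes z :: "vtx \<Rightarrow> real"
  assumes r: "r > 0"
  shows "\<exists>q\<in>PiE (grid_V p) (\<lambda>_. \<rat>). (\<Sum>v\<in>grid_V p. (z v - q v)^2) < r^2"
proof -
  define n where "n = real (card (grid_V p))"
  define \<delta> where "\<delta> = r / (n + 1)"
  have n0: "n \<ge> 0" unfolding n_def by simp
  have d0: "\<delta> > 0" unfolding \<delta>_def using r n0 by simp
  have "\<forall>v. \<exists>g\<in>\<rat>. z v - \<delta> < g \<and> g < z v + \<delta>"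
    using d0 by (auto intro: Rats_dense_in_real)
  then obtain g where g: "\<And>v. g v \<in> \<rat>" "\<And>v. z v - \<delta> < g v" "\<And>v. g v < z v + \<delta>"
    by metis
  define q where "q = restrict g (grid_V p)"
  have qQ: "q \<in> PiE (grid_V p) (\<lambda>_. \<rat>)" unfolding q_def using g(1) by auto
  have close: "(z v - q v)^2 \<le> \<delta>^2" if "v \<in> grid_V p" for v
  proof -
    have "\<bar>z v - q v\<bar> \<le> \<delta>" using g(2)[of v] g(3)[of v] that unfolding q_def by auto
    then show ?thesis by (metis abs_le_square_iff abs_of_pos d0)
  qed
  have "(\<Sum>v\<in>grid_V p. (z v - q v)^2) \<le> n * \<delta>^2"
    unfolding n_def using sum_bounded_above[of "grid_V p" "\<lambda>v. (z v - q v)^2" "\<delta>^2"] close by simp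
  also have "\<dots> < (n + 1) * \<delta>^2" using d0 by simp
  also have "\<dots> \<le> (n + 1)^2 * \<delta>^2"
    using n0 by (intro mult_right_mono) (auto simp: power2_eq_square)
  also have "\<dots> = r^2" unfolding \<delta>_def using n0 by (simp add: power_divide)
  finally show ?thesis using qQ by blast
qed

lemma scan_set_inner_close:
  assumes x: "x \<in> scan_set p \<rho>" and D: "(\<Sum>v\<in>grid_V p. (z v - q v)^2) < r^2" and r: "r > 0"
  shows "\<bar>vinner p x z - vinner p x q\<bar> < r"
proof -
  have "vinner p x z - vinner p x q = vinner p x (\<lambda>v. z v - q v)"
    unfolding vinner_def by (simp add: sum_subtractf[symmetric] algebra_simps)
  moreover have "(vinner p x (\<lambda>v. z v - q v))^2 < r^2"
    using scan_set_inner_sq_le[OF x, of "\<lambda>v. z v - q v"] D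
    unfolding vinner_def by (simp add: power2_eq_square)
  ultimately show ?thesis
    using r by (metis abs_of_pos power2_abs power_less_imp_less_base abs_ge_zero)
qed

definition rational_balls :: "nat \<Rightarrow> ((vtx \<Rightarrow> real) \<times> real) set" where
  "rational_balls p = PiE (grid_V p) (\<lambda>_. \<rat>) \<times> {r\<in>\<rat>. r > 0}"

lemma countable_rational_balls: "countable (rational_balls p)"
  unfolding rational_balls_def
  by (intro countable_SIGMA countable_PiE countable_rat countable_subset[OF _ countable_rat]) auto

lemma exceeds_iff_rational_ball:
  "(\<exists>x\<in>scan_set p \<rho>. \<bar>vinner p x z\<bar> > t) \<longleftrightarrow>
   (\<exists>(q, r)\<in>rational_balls p. (\<exists>x\<in>scan_set p \<rho>. \<bar>vinner p x q\<bar> > t + r) \<and>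
               (\<Sum>v\<in>grid_V p. (z v - q v)^2) < r^2)"
proof
  assume "\<exists>x\<in>scan_set p \<rho>. \<bar>vinner p x z\<bar> > t"
  then obtain x where x: "x \<in> scan_set p \<rho>" "\<bar>vinner p x z\<bar> > t" by blast
  obtain r where r: "r \<in> \<rat>" "0 < r" "r < (\<bar>vinner p x z\<bar> - t) / 2"
    using x(2) Rats_dense_in_real[of 0 "(\<bar>vinner p x z\<bar> - t) / 2"] by auto
  obtain q where q: "q \<in> PiE (grid_V p) (\<lambda>_. \<rat>)" "(\<Sum>v\<in>grid_V p. (z v - q v)^2) < r^2"
    using rational_approx[OF r(2)] by blast
  have "\<bar>vinner p x z - vinner p x q\<bar> < r" by (rule scan_set_inner_close[OF x(1) q(2) r(2)])
  then have "\<bar>vinner p x q\<bar> > t + r"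
    using r(3) abs_triangle_ineq2[of "vinner p x z" "vinner p x q"] by argo
  then show "\<exists>(q, r)\<in>rational_balls p. (\<exists>x\<in>scan_set p \<rho>. \<bar>vinner p x q\<bar> > t + r) \<and>
               (\<Sum>v\<in>grid_V p. (z v - q v)^2) < r^2"
    using q r x(1) by (intro bexI[of _ "(q, r)"]) (auto simp: rational_balls_def)
next
  assume "\<exists>(q, r)\<in>rational_balls p. (\<exists>x\<in>scan_set p \<rho>. \<bar>vinner p x q\<bar> > t + r) \<and>
               (\<Sum>v\<in>grid_V p. (z v - q v)^2) < r^2"
  then obtain q r x where qr: "(q, r) \<in> rational_balls p" and x: "x \<in> scan_set p \<rho>" "\<bar>vinner p x q\<bar> > t + r"
    and D: "(\<Sum>v\<in>grid_V p. (z v - q v)^2) < r^2" by auto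
  have "r > 0" using qr by (auto simp: rational_balls_def)
  then have "\<bar>vinner p x z - vinner p x q\<bar> < r" by (rule scan_set_inner_close[OF x(1) D])
  then have "\<bar>vinner p x z\<bar> > t"
    using x(2) abs_triangle_ineq2[of "vinner p x q" "vinner p x z"] by (simp add: abs_minus_commute)
  then show "\<exists>x\<in>scan_set p \<rho>. \<bar>vinner p x z\<bar> > t" using x by blast
qed

lemma sq_gt_iff_abs_gt_sqrt: "\<tau> \<ge> 0 \<Longrightarrow> (a::real)^2 > \<tau> \<longleftrightarrow> \<bar>a\<bar> > sqrt \<tau>"
  by (metis real_sqrt_abs real_sqrt_less_iff)

text \<open>The rejection region is a countable union of measurable sets.\<close>
lemma rejection_region_measurable:
  assumes \<rho>: "\<rho> \<ge> 0" and \<tau>: "\<tau> \<ge> 0"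
  shows "{y \<in> space (law_y p \<sigma> \<beta>). spectral_scan p \<rho> y > \<tau>} \<in> sets (law_y p \<sigma> \<beta>)"
proof -
  let ?M = "law_y p \<sigma> \<beta>"
  let ?good = "\<lambda>qr. \<exists>x\<in>scan_set p \<rho>. \<bar>vinner p x (fst qr)\<bar> > sqrt \<tau> + snd qr"
  let ?near = "\<lambda>qr y. (\<Sum>v\<in>grid_V p. (centre p y v - fst qr v)^2) < (snd qr)^2"
  have "spectral_scan p \<rho> y > \<tau> \<longleftrightarrow> (\<exists>qr\<in>rational_balls p. ?good qr \<and> ?near qr y)" for y
    unfolding spectral_scan_gt_iff[OF \<rho>] sq_gt_iff_abs_gt_sqrt[OF \<tau>]
      exceeds_iff_rational_ball[where z="centre p y" and t="sqrt \<tau>"]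
    by (simp add: case_prod_beta)
  then have eq: "{y \<in> space ?M. spectral_scan p \<rho> y > \<tau>}
      = {y \<in> space ?M. \<exists>qr\<in>rational_balls p. ?good qr \<and> ?near qr y}" by simp
  have "{y \<in> space ?M. ?good qr \<and> ?near qr y} \<in> sets ?M" for qr
  proof (cases "?good qr")
    case True
    have "{y \<in> space ?M. ?near qr y} \<in> sets ?M"
      using measurable_centred_dist[of p "fst qr" \<sigma> \<beta>] by measurable
    then show ?thesis using True by simp
  qed simp
  then show ?thesis
    unfolding eq by (rule sets.sets_Collect_countable_Ex'[OF _ countable_rational_balls])
qed

section \<open>False alarms under the null hypothesis\<close>

lemma null_scan_le_noise_energy:
  assumes b: "b > 0" and \<rho>: "\<rho> \<ge> 0" and \<beta>: "\<beta> \<in> Theta0 p"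
  shows "spectral_scan p \<rho> y
           \<le> 2 * (\<Sum>v\<in>grid_V p. (block_avg p b (\<lambda>w. y w - \<beta> w) v)^2)
             + 8 * real b ^ 2 * \<rho> * (\<Sum>v\<in>grid_V p. (y v - \<beta> v)^2)"
proof (rule spectral_scan_le[OF \<rho>])
  fix x assume x: "x \<in> scan_set p \<rho>"
  obtain \<mu> where \<mu>: "\<forall>v\<in>grid_V p. \<beta> v = \<mu>" using \<beta> unfolding Theta0_def by blast
  have sum0: "(\<Sum>v\<in>grid_V p. x v) = 0" using x unfolding scan_set_def by simp
  have "vinner p x (centre p y) = vinner p x y" by (rule vinner_centre[OF sum0])
  also have "\<dots> = vinner p x (\<lambda>v. y v - \<beta> v) + \<mu> * (\<Sum>v\<in>grid_V p. x v)"
    unfolding vinner_def using \<mu> by (simp add: sum_distrib_left sum.distrib[symmetric] algebra_simps)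
  finally have "vinner p x (centre p y) = vinner p x (\<lambda>v. y v - \<beta> v)" using sum0 by simp
  then show "(vinner p x (centre p y))^2
      \<le> 2 * (\<Sum>v\<in>grid_V p. (block_avg p b (\<lambda>w. y w - \<beta> w) v)^2)
        + 8 * real b ^ 2 * \<rho> * (\<Sum>v\<in>grid_V p. (y v - \<beta> v)^2)"
    using scan_set_inner_sq_le_block[OF b x, of "\<lambda>v. y v - \<beta> v"] by simp
qed

text \<open>The block averages of the noise have total expected energy sigma^2 times the number
  of blocks (the trace of the averaging projection) ...\<close>
lemma expected_block_avg_noise:
  assumes s: "\<sigma> > 0"
  shows "integrable (law_y p \<sigma> \<beta>) (\<lambda>y. \<Sum>v\<in>grid_V p. (block_avg p b (\<lambda>w. y w - \<beta> w) v)^2)"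
    and "integral\<^sup>L (law_y p \<sigma> \<beta>) (\<lambda>y. \<Sum>v\<in>grid_V p. (block_avg p b (\<lambda>w. y w - \<beta> w) v)^2)
           = \<sigma>^2 * real (card (block_index b ` grid_V p))"
proof -
  let ?M = "law_y p \<sigma> \<beta>"
  note moment = gauss_vec_linear_moment[OF s finite_grid_V, folded law_y_eq_gauss_vec]
  have linear: "block_avg p b (\<lambda>w. y w - \<beta> w) v = (\<Sum>w\<in>grid_V p. block_weight p b v w * (y w - \<beta> w))"
    for y v by (rule block_avg_linear)
  show "integrable ?M (\<lambda>y. \<Sum>v\<in>grid_V p. (block_avg p b (\<lambda>w. y w - \<beta> w) v)^2)"
    unfolding linear by (rule Bochner_Integration.integrable_sum) (rule moment(1))
  have "integral\<^sup>L ?M (\<lambda>y. \<Sum>v\<in>grid_V p. (block_avg p b (\<lambda>w. y w - \<beta> w) v)^2)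
      = (\<Sum>v\<in>grid_V p. integral\<^sup>L ?M (\<lambda>y. (\<Sum>w\<in>grid_V p. block_weight p b v w * (y w - \<beta> w))^2))"
    unfolding linear by (rule Bochner_Integration.integral_sum) (rule moment(1))
  also have "\<dots> = (\<Sum>v\<in>grid_V p. \<sigma>^2 * (1 / real (card (grid_block p b (block_index b v)))))"
    by (simp only: moment(2) sum_block_weight_sq)
  also have "\<dots> = \<sigma>^2 * real (card (block_index b ` grid_V p))"
    by (simp only: sum_distrib_left[symmetric] sum_inv_block_card)
  finally show "integral\<^sup>L ?M (\<lambda>y. \<Sum>v\<in>grid_V p. (block_avg p b (\<lambda>w. y w - \<beta> w) v)^2)
      = \<sigma>^2 * real (card (block_index b ` grid_V p))" .
qed

lemma expected_noise_energy:
  assumes s: "\<sigma> > 0"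
  shows "integrable (law_y p \<sigma> \<beta>) (\<lambda>y. \<Sum>v\<in>grid_V p. (y v - \<beta> v)^2)"
    and "integral\<^sup>L (law_y p \<sigma> \<beta>) (\<lambda>y. \<Sum>v\<in>grid_V p. (y v - \<beta> v)^2) = \<sigma>^2 * real (card (grid_V p))"
proof -
  note cov = gauss_vec_covariance[OF s finite_grid_V _ _, folded law_y_eq_gauss_vec]
  show "integrable (law_y p \<sigma> \<beta>) (\<lambda>y. \<Sum>v\<in>grid_V p. (y v - \<beta> v)^2)"
    unfolding power2_eq_square by (rule Bochner_Integration.integrable_sum) (rule cov(1))
  have "integral\<^sup>L (law_y p \<sigma> \<beta>) (\<lambda>y. \<Sum>v\<in>grid_V p. (y v - \<beta> v)^2)
      = (\<Sum>v\<in>grid_V p. integral\<^sup>L (law_y p \<sigma> \<beta>) (\<lambda>y. (y v - \<beta> v) * (y v - \<beta> v)))"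
    unfolding power2_eq_square by (rule Bochner_Integration.integral_sum) (rule cov(1))
  also have "\<dots> = (\<Sum>v\<in>grid_V p. \<sigma>^2)"
    by (rule sum.cong) (simp_all add: cov(2))
  finally show "integral\<^sup>L (law_y p \<sigma> \<beta>) (\<lambda>y. \<Sum>v\<in>grid_V p. (y v - \<beta> v)^2) = \<sigma>^2 * real (card (grid_V p))"
    by simp
qed

text \<open>Markov's inequality applied to the dominating noise energy.\<close>
lemma null_error_le:
  assumes s: "\<sigma> > 0" and b: "b > 0" and \<rho>: "\<rho> \<ge> 0" and \<tau>: "\<tau> > 0" and \<beta>: "\<beta> \<in> Theta0 p"
  shows "measure (law_y p \<sigma> \<beta>) {y \<in> space (law_y p \<sigma> \<beta>). spectral_scan p \<rho> y > \<tau>}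
     \<le> \<sigma>^2 * (2 * real (card (block_index b ` grid_V p)) + 8 * real b ^ 2 * \<rho> * real (card (grid_V p))) / \<tau>"
proof -
  interpret P: prob_space "law_y p \<sigma> \<beta>"
    unfolding law_y_eq_gauss_vec by (rule prob_space_gauss_vec[OF s])
  let ?M = "law_y p \<sigma> \<beta>"
  define E where "E y = 2 * (\<Sum>v\<in>grid_V p. (block_avg p b (\<lambda>w. y w - \<beta> w) v)^2)
                        + 8 * real b ^ 2 * \<rho> * (\<Sum>v\<in>grid_V p. (y v - \<beta> v)^2)" for y
  have E_int: "integrable ?M E"
    unfolding E_def using expected_block_avg_noise(1)[OF s] expected_noise_energy(1)[OF s] by auto
  have E_mean: "integral\<^sup>L ?M E
      = \<sigma>^2 * (2 * real (card (block_index b ` grid_V p)) + 8 * real b ^ 2 * \<rho> * real (card (grid_V p)))"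
    unfolding E_def
    using expected_block_avg_noise[OF s] expected_noise_energy[OF s] by (simp add: algebra_simps)
  have E_nonneg: "E y \<ge> 0" for y
    unfolding E_def using \<rho> by (intro add_nonneg_nonneg mult_nonneg_nonneg sum_nonneg) auto
  have "{y \<in> space ?M. spectral_scan p \<rho> y > \<tau>} \<subseteq> {y \<in> space ?M. E y \<ge> \<tau>}"
    using null_scan_le_noise_energy[OF b \<rho> \<beta>] unfolding E_def by (auto intro: less_imp_le order.strict_trans2)
  then have "measure ?M {y \<in> space ?M. spectral_scan p \<rho> y > \<tau>} \<le> measure ?M {y \<in> space ?M. E y \<ge> \<tau>}"
    by (rule P.finite_measure_mono) (use borel_measurable_integrable[OF E_int] in measurable)
  also have "\<dots> \<le> integral\<^sup>L ?M E / \<tau>"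
    by (rule integral_Markov_inequality_measure[OF E_int _ _ \<tau>, of "space ?M"]) (use E_nonneg in auto)
  finally show ?thesis unfolding E_mean .
qed

section \<open>Missed detections under the alternative\<close>

lemma sum_indicator_eq_card:
  assumes "C \<subseteq> grid_V p"
  shows "(\<Sum>v\<in>grid_V p. (indicator C v :: real)) = real (card C)"
proof -
  have "(\<Sum>v\<in>grid_V p. (indicator C v :: real)) = (\<Sum>v\<in>grid_V p \<inter> C. 1)"
    unfolding indicator_def by (simp add: sum.inter_restrict)
  also have "grid_V p \<inter> C = C" using assms by blast
  finally show ?thesis by simp
qed

lemma sum_centre: "(\<Sum>v\<in>grid_V p. centre p x v) = 0"
proof (cases "grid_V p = {}")
  case False
  then show ?thesis unfolding centre_def vmean_def by (simp add: sum_subtractf)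
qed simp

lemma centre_shifted_indicator:
  assumes C: "C \<subseteq> grid_V p" and \<beta>: "\<forall>v\<in>grid_V p. \<beta> v = \<mu> + \<delta> * indicator C v"
    and v: "v \<in> grid_V p"
  shows "centre p \<beta> v = \<delta> * (indicator C v - real (card C) / real (card (grid_V p)))"
proof -
  have ne: "grid_V p \<noteq> {}" using v by auto
  then have n: "real (card (grid_V p)) > 0" by (simp add: card_gt_0_iff)
  have "(\<Sum>w\<in>grid_V p. \<beta> w) = (\<Sum>w\<in>grid_V p. \<mu> + \<delta> * indicator C w)"
    using \<beta> by (intro sum.cong) auto
  also have "\<dots> = real (card (grid_V p)) * \<mu> + \<delta> * real (card C)"
    using C by (simp add: sum.distrib sum_distrib_left[symmetric] sum_indicator_eq_card)
  finally have "vmean p \<beta> = \<mu> + \<delta> * real (card C) / real (card (grid_V p))"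
    unfolding vmean_def using n ne by (simp add: add_divide_distrib)
  then show ?thesis unfolding centre_def using \<beta> v by (simp add: algebra_simps)
qed

lemma sq_norm_centre_shifted_indicator:
  assumes C: "C \<subseteq> grid_V p" "C \<noteq> {}" and \<beta>: "\<forall>v\<in>grid_V p. \<beta> v = \<mu> + \<delta> * indicator C v"
  shows "vinner p (centre p \<beta>) (centre p \<beta>)
       = \<delta>^2 * real (card C) * (real (card (grid_V p)) - real (card C)) / real (card (grid_V p))"
proof -
  define n where "n = real (card (grid_V p))"
  define k where "k = real (card C)"
  have n: "n > 0" using C unfolding n_def by (auto simp: card_gt_0_iff)
  have ind_sq: "(indicator C v :: real) * indicator C v = indicator C v" for v
    by (simp add: indicator_def)
  have sum_ind: "(\<Sum>v\<in>grid_V p. (indicator C v :: real)) = k"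
    using C(1) unfolding k_def by (rule sum_indicator_eq_card)
  have "vinner p (centre p \<beta>) (centre p \<beta>)
      = (\<Sum>v\<in>grid_V p. (\<delta>^2 * (1 - 2 * (k/n))) * indicator C v + \<delta>^2 * (k/n)^2)"
    unfolding vinner_def
    by (intro sum.cong refl)
      (simp add: centre_shifted_indicator[OF C(1) \<beta>] k_def[symmetric] n_def[symmetric]
        power2_eq_square algebra_simps ind_sq)
  also have "\<dots> = \<delta>^2 * (1 - 2 * (k/n)) * k + n * (\<delta>^2 * (k/n)^2)"
    by (simp add: sum.distrib sum_distrib_left[symmetric] sum_ind n_def)
  also have "\<dots> = \<delta>^2 * k * (n - k) / n"
    using n by (simp add: field_simps power2_eq_square)
  finally show ?thesis unfolding n_def k_def .
qed

lemma cut_class_cleared: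
  assumes "C \<in> cut_class p \<rho>"
  shows "real (cut_size p C) * real (card (grid_V p))
           \<le> \<rho> * (real (card C) * (real (card (grid_V p)) - real (card C)))"
    and "0 < real (card C)" and "real (card C) < real (card (grid_V p))"
proof -
  define n where "n = real (card (grid_V p))"
  define k where "k = real (card C)"
  have C: "C \<subseteq> grid_V p" "C \<noteq> {}" "C \<noteq> grid_V p"
    and ratio: "real (cut_size p C) / (k * real (card (grid_V p - C))) \<le> \<rho> / n"
    using assms unfolding cut_class_def k_def n_def by auto
  have "finite C" using C(1) by (rule finite_subset) simp
  then show k: "0 < real (card C)" using C by (simp add: card_gt_0_iff)
  show kn: "real (card C) < real (card (grid_V p))" using C by (auto intro!: psubset_card_mono)
  have "real (card (grid_V p - C)) = n - k"
    unfolding n_def k_def using C by (simp add: card_Diff_subset card_mono finite_subset)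
  then have "real (cut_size p C) / (k * (n - k)) \<le> \<rho> / n" using ratio by simp
  moreover have "k * (n - k) > 0" "n > 0" using k kn unfolding k_def n_def by simp_all
  ultimately show "real (cut_size p C) * real (card (grid_V p))
      \<le> \<rho> * (real (card C) * (real (card (grid_V p)) - real (card C)))"
    unfolding k_def[symmetric] n_def[symmetric] by (simp add: field_simps)
qed

lemma Theta1_direction:
  assumes \<beta>: "\<beta> \<in> Theta1 p \<rho> \<eta>" and \<eta>: "\<eta> > 0"
  defines "x0 \<equiv> \<lambda>v. centre p \<beta> v / vnorm p (centre p \<beta>)"
  shows "x0 \<in> scan_set p \<rho>" and "vinner p x0 x0 = 1" and "vinner p x0 \<beta> \<ge> \<eta>"
proof -
  obtain \<mu> \<delta> C where \<delta>: "\<delta> \<noteq> 0" and C: "C \<in> cut_class p \<rho>"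
    and \<beta>_ind: "\<forall>v\<in>grid_V p. \<beta> v = \<mu> + \<delta> * indicator C v" and strong: "vnorm p (centre p \<beta>) \<ge> \<eta>"
    using \<beta> unfolding Theta1_def by blast
  have C_sub: "C \<subseteq> grid_V p" "C \<noteq> {}" using C unfolding cut_class_def by auto
  define N where "N = vnorm p (centre p \<beta>)"
  define n where "n = real (card (grid_V p))"
  define k where "k = real (card C)"
  have N: "N \<ge> \<eta>" "N > 0" using strong \<eta> unfolding N_def by auto
  have NN: "vinner p (centre p \<beta>) (centre p \<beta>) = N^2"
    unfolding N_def vnorm_def using vinner_self_nonneg[of p "centre p \<beta>"] by simp
  have NN_ind: "N^2 = \<delta>^2 * k * (n - k) / n"
    using NN sq_norm_centre_shifted_indicator[OF C_sub \<beta>_ind] unfolding k_def n_def by simp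
  note cut = cut_class_cleared[OF C, folded n_def k_def]
  have sum0: "(\<Sum>v\<in>grid_V p. x0 v) = 0"
    unfolding x0_def by (simp add: sum_divide_distrib[symmetric] sum_centre)
  show unit: "vinner p x0 x0 = 1"
    unfolding x0_def N_def[symmetric] vinner_def using NN N
    by (simp add: sum_divide_distrib[symmetric] vinner_def power2_eq_square)
  have "quadL p x0 = (\<delta> / N)^2 * quadL p (indicator C)"
  proof (rule quadL_affine)
    fix u v assume "u \<in> grid_V p" "v \<in> grid_V p"
    then show "x0 u - x0 v = \<delta> / N * (indicator C u - indicator C v)"
      unfolding x0_def N_def[symmetric] using N
      by (simp add: centre_shifted_indicator[OF C_sub(1) \<beta>_ind] field_simps)
  qed
  also have "\<dots> = real (cut_size p C) * n / (k * (n - k))"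
    unfolding quadL_indicator[OF C_sub(1)] power_divide NN_ind using \<delta> cut(2,3) by (simp add: field_simps)
  also have "\<dots> \<le> \<rho>"
    using cut by (simp add: divide_le_eq mult.commute)
  finally have "quadL p x0 \<le> \<rho>" .
  then show "x0 \<in> scan_set p \<rho>"
    unfolding scan_set_def vnorm_def using unit sum0 by simp
  have "vinner p x0 \<beta> = vinner p x0 (centre p \<beta>)" by (rule vinner_centre[OF sum0, symmetric])
  also have "\<dots> = N"
    unfolding x0_def N_def[symmetric] vinner_def using NN N
    by (simp add: sum_divide_distrib[symmetric] vinner_def power2_eq_square)
  finally show "vinner p x0 \<beta> \<ge> \<eta>" using N by simp
qed

text \<open>Chebyshev's inequality for a linear functional of the noise.\<close>
lemma linear_noise_tail:
  assumes s: "\<sigma> > 0" and t: "t > 0"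
  shows "measure (law_y p \<sigma> \<beta>) {y \<in> space (law_y p \<sigma> \<beta>). t \<le> \<bar>\<Sum>v\<in>grid_V p. a v * (y v - \<beta> v)\<bar>}
           \<le> \<sigma>^2 * (\<Sum>v\<in>grid_V p. (a v)^2) / t^2"
proof -
  interpret P: prob_space "law_y p \<sigma> \<beta>"
    unfolding law_y_eq_gauss_vec by (rule prob_space_gauss_vec[OF s])
  note moment = gauss_vec_linear_moment[OF s finite_grid_V, folded law_y_eq_gauss_vec]
  show ?thesis
    using P.second_moment_method[OF measurable_linear_noise moment(1) t] unfolding moment(2) .
qed

text \<open>Under H1, with x0 the direction above, x0^T (centred y) = |centred beta| + f y where
  f y is N(0, sigma^2), and the statistic dominates its square; so s <= eta^2 / 8 forces
  |f y| >= eta / 2.\<close>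
lemma alt_error_le:
  assumes s: "\<sigma> > 0" and \<eta>: "\<eta> > 0" and \<beta>: "\<beta> \<in> Theta1 p \<rho> \<eta>"
  shows "measure (law_y p \<sigma> \<beta>) {y \<in> space (law_y p \<sigma> \<beta>). \<not> spectral_scan p \<rho> y > \<eta>^2 / 8}
           \<le> 4 * \<sigma>^2 / \<eta>^2"
proof -
  interpret P: prob_space "law_y p \<sigma> \<beta>"
    unfolding law_y_eq_gauss_vec by (rule prob_space_gauss_vec[OF s])
  let ?M = "law_y p \<sigma> \<beta>"
  define x0 where "x0 = (\<lambda>v. centre p \<beta> v / vnorm p (centre p \<beta>))"
  note dir = Theta1_direction[OF \<beta> \<eta>, folded x0_def]
  define f where "f y = (\<Sum>v\<in>grid_V p. x0 v * (y v - \<beta> v))" for y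
  have f_measurable: "f \<in> borel_measurable ?M" unfolding f_def by (rule measurable_linear_noise)
  have sum0: "(\<Sum>v\<in>grid_V p. x0 v) = 0" using dir(1) unfolding scan_set_def by simp
  have signal_plus_noise: "vinner p x0 (centre p y) = vinner p x0 \<beta> + f y" for y
    unfolding vinner_centre[OF sum0] unfolding vinner_def f_def
    by (simp add: sum.distrib[symmetric] algebra_simps)
  have "{y \<in> space ?M. \<not> spectral_scan p \<rho> y > \<eta>^2 / 8} \<subseteq> {y \<in> space ?M. \<eta> / 2 \<le> \<bar>f y\<bar>}"
  proof clarify
    fix y assume y: "y \<in> space ?M" and low: "\<not> spectral_scan p \<rho> y > \<eta>^2 / 8"
    show "\<eta> / 2 \<le> \<bar>f y\<bar>"
    proof (rule ccontr)
      assume "\<not> \<eta> / 2 \<le> \<bar>f y\<bar>"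
      then have "vinner p x0 (centre p y) > \<eta> / 2" using signal_plus_noise[of y] dir(3) by linarith
      then have "(\<eta> / 2)^2 < (vinner p x0 (centre p y))^2" using \<eta> by (intro power_strict_mono) auto
      also have "\<dots> \<le> spectral_scan p \<rho> y" by (rule spectral_scan_ge[OF dir(1)])
      finally have "\<eta>^2 / 4 < spectral_scan p \<rho> y" by (simp add: power_divide)
      moreover have "\<eta>^2 > 0" using \<eta> by simp
      ultimately show False using low by linarith
    qed
  qed
  then have "measure ?M {y \<in> space ?M. \<not> spectral_scan p \<rho> y > \<eta>^2 / 8}
      \<le> measure ?M {y \<in> space ?M. \<eta> / 2 \<le> \<bar>f y\<bar>}"
    by (rule P.finite_measure_mono) (use f_measurable in measurable)
  also have "\<dots> \<le> \<sigma>^2 * 1 / (\<eta> / 2)^2"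
    using linear_noise_tail[where t="\<eta> / 2" and a=x0 and p=p and \<beta>=\<beta>, OF s] dir(2) \<eta> unfolding f_def vinner_def
    by (simp add: power2_eq_square)
  also have "\<dots> = 4 * \<sigma>^2 / \<eta>^2" by (simp add: power_divide)
  finally show ?thesis .
qed

lemma floor_fourth_root:
  assumes p: "p \<ge> 1"
  defines "S \<equiv> real p powr (1/4)"
  shows "1 \<le> S" and "S^4 = real p" and "nat \<lfloor>S\<rfloor> > 0"
    and "real (nat \<lfloor>S\<rfloor>) \<le> S" and "S / 2 \<le> real (nat \<lfloor>S\<rfloor>)"
proof -
  show S1: "1 \<le> S" unfolding S_def using p by (intro ge_one_powr_ge_zero) auto
  show "S^4 = real p" unfolding S_def using p by (subst powr_power) auto
  have floor1: "\<lfloor>S\<rfloor> \<ge> 1" using S1 by simp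
  then have b_real: "real (nat \<lfloor>S\<rfloor>) = real_of_int \<lfloor>S\<rfloor>" by simp
  show "nat \<lfloor>S\<rfloor> > 0" using floor1 by simp
  show "real (nat \<lfloor>S\<rfloor>) \<le> S" unfolding b_real by simp
  show "S / 2 \<le> real (nat \<lfloor>S\<rfloor>)" using floor1 unfolding b_real by linarith
qed

text \<open>Choice of the block side b = floor (p^(1/4)).  With rho = c / sqrt n both the number of
  blocks (about p^2 / b^2) and the Poincare term b^2 rho n (about b^2 p) are O(p^(3/2)),
  i.e. O(n^(3/4)).\<close>
lemma block_size_choice:
  assumes p: "p \<ge> 1" and c: "c > 0"
  obtains b where "b > 0"
    and "2 * real (card (block_index b ` grid_V p))
           + 8 * real b ^ 2 * (c / sqrt (real (p^2))) * real (card (grid_V p))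
         \<le> (18 + 8 * c) * (real (p^2) powr (3/8))^2"
proof -
  define x where "x = real p"
  define S where "S = x powr (1/4)"
  define b where "b = nat \<lfloor>S\<rfloor>"
  note root = floor_fourth_root[OF p, folded x_def, folded S_def b_def]
  have x1: "x \<ge> 1" unfolding x_def using p by simp
  have S6: "(real (p^2) powr (3/8))^2 = S^6"
  proof -
    have "real (p^2) powr (3/8) = (x powr 2) powr (3/8)" unfolding x_def using p by simp
    also have "\<dots> = S^3" unfolding S_def powr_powr using x1 by (subst powr_power) auto
    finally show ?thesis by (simp add: power_mult[symmetric])
  qed
  have quotient: "real (p div b) \<le> 2 * S^3"
  proof -
    have "real (p div b) \<le> x / real b" unfolding x_def by (rule of_nat_div_le_of_nat)
    also have "\<dots> \<le> x / (S / 2)" using root(1,5) x1 by (intro divide_left_mono) auto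
    also have "\<dots> = 2 * S^3" unfolding root(2)[symmetric] using root(1) by (simp add: field_simps power_def)
    finally show ?thesis .
  qed
  have blocks: "real (card (block_index b ` grid_V p)) \<le> 9 * S^6"
  proof -
    have "real (card (block_index b ` grid_V p)) \<le> (real (p div b) + 1)^2"
      using card_blocks_le[of b p] by (metis of_nat_1 of_nat_add of_nat_le_iff of_nat_power)
    also have "\<dots> \<le> (3 * S^3)^2"
    proof (rule power_mono)
      have "1 \<le> S^3" using root(1) by simp
      then show "real (p div b) + 1 \<le> 3 * S^3" using quotient by linarith
    qed simp
    also have "\<dots> = 9 * S^6" by (simp add: power_mult_distrib power_mult[symmetric])
    finally show ?thesis .
  qed
  have poincare_term: "real b ^ 2 * (c / sqrt (real (p^2))) * real (card (grid_V p)) \<le> c * S^6"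
  proof -
    have "real b ^ 2 * (c / sqrt (real (p^2))) * real (card (grid_V p)) = real b ^ 2 * c * x"
      unfolding card_grid_V x_def using x1 x_def by (simp add: power2_eq_square)
    also have "\<dots> \<le> S^2 * c * x"
      using root(4) c x1 by (intro mult_right_mono power_mono) auto
    also have "\<dots> = c * S^6" unfolding root(2)[symmetric] by (simp add: power_def)
    finally show ?thesis .
  qed
  show ?thesis
  proof (rule that[OF root(3)])
    have "8 * real b ^ 2 * (c / sqrt (real (p^2))) * real (card (grid_V p))
        = 8 * (real b ^ 2 * (c / sqrt (real (p^2))) * real (card (grid_V p)))" by (simp only: mult.assoc)
    then show "2 * real (card (block_index b ` grid_V p))
           + 8 * real b ^ 2 * (c / sqrt (real (p^2))) * real (card (grid_V p))
         \<le> (18 + 8 * c) * (real (p^2) powr (3/8))^2"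
      unfolding S6 using blocks poincare_term by (simp only: distrib_right)
  qed
qed

lemma null_error_rate:
  assumes c: "c > 0" and s: "\<sigma> > 0" and \<eta>: "\<eta> > 0" and p: "p \<ge> 1" and \<beta>: "\<beta> \<in> Theta0 p"
  shows "measure (law_y p \<sigma> \<beta>) {y \<in> space (law_y p \<sigma> \<beta>).
           spectral_scan p (c / sqrt (real (p^2))) y > \<eta>^2 / 8}
         \<le> 8 * (18 + 8 * c) * (real (p^2) powr (3/8) / (\<eta> / \<sigma>))^2"
proof -
  let ?\<rho> = "c / sqrt (real (p^2))"
  let ?q = "real (p^2) powr (3/8)"
  obtain b where b: "b > 0"
    and rate: "2 * real (card (block_index b ` grid_V p)) + 8 * real b ^ 2 * ?\<rho> * real (card (grid_V p))
                 \<le> (18 + 8 * c) * ?q^2"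
    using block_size_choice[OF p c] by blast
  have "measure (law_y p \<sigma> \<beta>) {y \<in> space (law_y p \<sigma> \<beta>). spectral_scan p ?\<rho> y > \<eta>^2 / 8}
      \<le> \<sigma>^2 * (2 * real (card (block_index b ` grid_V p)) + 8 * real b ^ 2 * ?\<rho> * real (card (grid_V p)))
          / (\<eta>^2 / 8)"
    using c \<eta> by (intro null_error_le[OF s b _ _ \<beta>]) auto
  also have "\<dots> \<le> \<sigma>^2 * ((18 + 8 * c) * ?q^2) / (\<eta>^2 / 8)"
    using rate \<eta> by (intro divide_right_mono mult_left_mono) auto
  also have "\<dots> = 8 * (18 + 8 * c) * (?q / (\<eta> / \<sigma>))^2"
    using s \<eta> by (simp add: field_simps)
  finally show ?thesis .
qed

lemma alt_error_rate:
  assumes s: "\<sigma> > 0" and \<eta>: "\<eta> > 0" and p: "p \<ge> 1" and \<beta>: "\<beta> \<in> Theta1 p \<rho> \<eta>"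
  shows "measure (law_y p \<sigma> \<beta>) {y \<in> space (law_y p \<sigma> \<beta>). \<not> spectral_scan p \<rho> y > \<eta>^2 / 8}
         \<le> 4 * (real (p^2) powr (3/8) / (\<eta> / \<sigma>))^2"
proof -
  have q1: "1 \<le> real (p^2) powr (3/8)" using p by (intro ge_one_powr_ge_zero) auto
  have "4 * \<sigma>^2 / \<eta>^2 = 4 * (1 / (\<eta> / \<sigma>))^2" using s by (simp add: power_divide)
  also have "\<dots> \<le> 4 * (real (p^2) powr (3/8) / (\<eta> / \<sigma>))^2"
    using q1 s \<eta> by (intro mult_left_mono power_mono divide_right_mono) auto
  finally show ?thesis using alt_error_le[OF s \<eta> \<beta>] by linarith
qed

lemma uniformly_eventually_small:
  fixes r :: "nat \<Rightarrow> real" and g :: "nat \<Rightarrow> 'a \<Rightarrow> real"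
  assumes r: "r \<longlonglongrightarrow> 0" and bound: "\<And>p x. p \<ge> 1 \<Longrightarrow> x \<in> A p \<Longrightarrow> g p x \<le> K * (r p)^2"
  shows "\<forall>\<epsilon>>0. eventually (\<lambda>p. \<forall>x\<in>A p. g p x \<le> \<epsilon>) sequentially"
proof (intro allI impI)
  fix \<epsilon> :: real assume \<epsilon>: "\<epsilon> > 0"
  have "(\<lambda>p. K * (r p)^2) \<longlonglongrightarrow> K * 0^2" by (intro tendsto_intros r)
  then have "eventually (\<lambda>p. K * (r p)^2 < \<epsilon>) sequentially" using \<epsilon> by (simp add: order_tendstoD(2))
  moreover have "eventually (\<lambda>p. p \<ge> 1) sequentially" by (rule eventually_ge_at_top)
  ultimately show "eventually (\<lambda>p. \<forall>x\<in>A p. g p x \<le> \<epsilon>) sequentially"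
    by eventually_elim (use bound in \<open>fastforce intro: order_trans less_imp_le\<close>)
qed

theorem corollary3:
  fixes c :: real and \<sigma> \<eta> :: "nat \<Rightarrow> real"
  assumes c_pos: "c > 0"
    and \<sigma>_pos: "\<forall>p. \<sigma> p > 0"
    and \<eta>_pos: "\<forall>p. \<eta> p > 0"
    and snr: "(\<lambda>p. real (p\<^sup>2) powr (3/8) / (\<eta> p / \<sigma> p)) \<longlonglongrightarrow> 0"
  shows "\<exists>\<tau> :: nat \<Rightarrow> real.
    (\<forall>p \<beta>. {y \<in> space (law_y p (\<sigma> p) \<beta>).
              spectral_scan p (c / sqrt (real (p\<^sup>2))) y > \<tau> p} \<in> sets (law_y p (\<sigma> p) \<beta>)) \<and>
    (\<forall>\<epsilon>>0. eventually (\<lambda>p. \<forall>\<beta>\<in>Theta0 p.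
        measure (law_y p (\<sigma> p) \<beta>) {y \<in> space (law_y p (\<sigma> p) \<beta>).
          spectral_scan p (c / sqrt (real (p\<^sup>2))) y > \<tau> p} \<le> \<epsilon>) sequentially) \<and>
    (\<forall>\<epsilon>>0. eventually (\<lambda>p. \<forall>\<beta>\<in>Theta1 p (c / sqrt (real (p\<^sup>2))) (\<eta> p).
        measure (law_y p (\<sigma> p) \<beta>) {y \<in> space (law_y p (\<sigma> p) \<beta>).
          \<not> spectral_scan p (c / sqrt (real (p\<^sup>2))) y > \<tau> p} \<le> \<epsilon>) sequentially)"
proof (intro exI conjI)
  let ?\<tau> = "\<lambda>p. (\<eta> p)^2 / 8"
  show "\<forall>p \<beta>. {y \<in> space (law_y p (\<sigma> p) \<beta>).
          spectral_scan p (c / sqrt (real (p\<^sup>2))) y > ?\<tau> p} \<in> sets (law_y p (\<sigma> p) \<beta>)"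
    using c_pos by (intro allI rejection_region_measurable) auto
  show "\<forall>\<epsilon>>0. eventually (\<lambda>p. \<forall>\<beta>\<in>Theta0 p.
      measure (law_y p (\<sigma> p) \<beta>) {y \<in> space (law_y p (\<sigma> p) \<beta>).
        spectral_scan p (c / sqrt (real (p\<^sup>2))) y > ?\<tau> p} \<le> \<epsilon>) sequentially"
    by (rule uniformly_eventually_small[OF snr])
      (use null_error_rate c_pos \<sigma>_pos \<eta>_pos in blast)
  show "\<forall>\<epsilon>>0. eventually (\<lambda>p. \<forall>\<beta>\<in>Theta1 p (c / sqrt (real (p\<^sup>2))) (\<eta> p).
      measure (law_y p (\<sigma> p) \<beta>) {y \<in> space (law_y p (\<sigma> p) \<beta>).
        \<not> spectral_scan p (c / sqrt (real (p\<^sup>2))) y > ?\<tau> p} \<le> \<epsilon>) sequentially"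
    by (rule uniformly_eventually_small[OF snr])
      (use alt_error_rate \<sigma>_pos \<eta>_pos in blast)
qed

end
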